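(* Let $X$ be a compactly generated locally compact Hausdorff group with compact generating set $Y$ and word length function $\ell$. Let $\mathcal H$ be a Hilbert space, let $U:X\to\mathcal U(\mathcal H)$ be a unitary representation of $X$, and let $\{x_j\}_{j\in J}$ be a net in $X$ with $x_j\to\infty$. Assume there exists a self-adjoint operator $A$ in $\mathcal H$ such that $U(y)\in C^1(A)$ for each $y\in Y$, and suppose that the strong limit $$D:=\operatorname{s-lim}_j\frac{1}{\ell(x_j)}[A,U(x_j)]U(x_j)^{-1}$$ exists. Then: (a) $\lim_j\langle\varphi,U(x_j)\psi\rangle=0$ for all $\varphi\in\ker(D)^\perp$ and $\psi\in\mathcal H$; (b) $U$ has no nontrivial finite-dimensional unitary subrepresentation in $\ker(D)^\perp$, i.e. there is no nonzero finite-dimensional subspace of $\ker(D)^\perp$ invariant under all $U(x)$, $x\in X$.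
   Context: $\mathcal U(\mathcal H)$ is the group of unitary operators on $\mathcal H$; the scalar product is antilinear in the first argument. The word length function is $\ell(x):=\min\{n\ge0: x\in(Y\cup Y^{-1})^n\}$ (with $(Y\cup Y^{-1})^0=\{e\}$). A net $\{x_j\}$ in $X$ diverges to infinity ($x_j\to\infty$) if it has no limit (cluster) point in $X$. For a self-adjoint operator $A$ and bounded $S$, $S\in C^1(A)$ means $t\mapsto e^{-itA}Se^{itA}$ is strongly $C^1$; equivalently the form $\mathrm{dom}(A)\ni\varphi\mapsto\langle A\varphi,S\varphi\rangle-\langle\varphi,SA\varphi\rangle$ is continuous for the topology of $\mathcal H$, and $[A,S]$ denotes the bounded operator associated with its continuous extension. *)

theory Defs
  imports "HOL-Analysis.Analysis"
begin

text \<open>The distribution has no complex inner product spaces, so we introduce a type class: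
a real normed vector space with a compatible complex scalar multiplication and a
complex scalar product, antilinear in the first argument, whose norm is induced by
the scalar product.\<close>

class complex_inner_space = real_normed_vector +
  fixes scaleC :: "complex \<Rightarrow> 'a \<Rightarrow> 'a"
    and cinner :: "'a \<Rightarrow> 'a \<Rightarrow> complex"
  assumes scaleC_of_real: "scaleC (of_real r) x = scaleR r x"
    and scaleC_add_right: "scaleC c (x + y) = scaleC c x + scaleC c y"
    and scaleC_add_left: "scaleC (c + d) x = scaleC c x + scaleC d x"
    and scaleC_scaleC: "scaleC c (scaleC d x) = scaleC (c * d) x"
    and scaleC_one: "scaleC 1 x = x"
    and cinner_add_right: "cinner x (y + z) = cinner x y + cinner x z"
    and cinner_scaleC_right: "cinner x (scaleC c y) = c * cinner x y"
    and cinner_commute: "cinner y x = cnj (cinner x y)"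
    and cinner_self_norm: "cinner x x = complex_of_real ((norm x)\<^sup>2)"

class chilbert_space = complex_inner_space + complete_space

definition bounded_clinear :: "('a::complex_inner_space \<Rightarrow> 'b::complex_inner_space) \<Rightarrow> bool" where
  "bounded_clinear f \<longleftrightarrow> bounded_linear f \<and> (\<forall>c x. f (scaleC c x) = scaleC c (f x))"

definition unitary_op :: "('h::chilbert_space \<Rightarrow> 'h) \<Rightarrow> bool" where
  "unitary_op V \<longleftrightarrow> bounded_clinear V \<and> surj V \<and> (\<forall>x y. cinner (V x) (V y) = cinner x y)"

definition csubspace :: "'h::complex_inner_space set \<Rightarrow> bool" where
  "csubspace S \<longleftrightarrow> 0 \<in> S \<and> (\<forall>x\<in>S. \<forall>y\<in>S. x + y \<in> S) \<and> (\<forall>c. \<forall>x\<in>S. scaleC c x \<in> S)"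

definition cspan :: "'h::complex_inner_space set \<Rightarrow> 'h set" where
  "cspan B = {x. \<exists>F c. finite F \<and> F \<subseteq> B \<and> x = (\<Sum>b\<in>F. scaleC (c b) b)}"

definition finite_dim_csubspace :: "'h::complex_inner_space set \<Rightarrow> bool" where
  "finite_dim_csubspace V \<longleftrightarrow> csubspace V \<and> (\<exists>B. finite B \<and> V = cspan B)"

definition orth_compl :: "'h::complex_inner_space set \<Rightarrow> 'h set" where
  "orth_compl S = {\<phi>. \<forall>\<psi>\<in>S. cinner \<psi> \<phi> = 0}"

text \<open>A (possibly unbounded) self-adjoint operator, given by its domain and its action
on the domain: densely defined, linear, and equal to its adjoint.\<close>

definition self_adjoint :: "'h::chilbert_space set \<Rightarrow> ('h \<Rightarrow> 'h) \<Rightarrow> bool" where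
  "self_adjoint domA A \<longleftrightarrow>
     csubspace domA \<and> closure domA = UNIV \<and>
     (\<forall>x\<in>domA. \<forall>y\<in>domA. A (x + y) = A x + A y) \<and>
     (\<forall>c. \<forall>x\<in>domA. A (scaleC c x) = scaleC c (A x)) \<and>
     (\<forall>\<phi>\<in>domA. \<forall>\<psi>\<in>domA. cinner (A \<phi>) \<psi> = cinner \<phi> (A \<psi>)) \<and>
     (\<forall>\<psi> \<eta>. (\<forall>\<phi>\<in>domA. cinner (A \<phi>) \<psi> = cinner \<phi> \<eta>) \<longrightarrow> \<psi> \<in> domA \<and> A \<psi> = \<eta>)"

definition C1 :: "'h::chilbert_space set \<Rightarrow> ('h \<Rightarrow> 'h) \<Rightarrow> ('h \<Rightarrow> 'h) \<Rightarrow> bool" where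
  "C1 domA A S \<longleftrightarrow> bounded_clinear S \<and>
     continuous_on domA (\<lambda>\<phi>. cinner (A \<phi>) (S \<phi>) - cinner \<phi> (S (A \<phi>)))"

text \<open>[A,S]: the bounded operator associated with the continuous extension of that form.\<close>

definition commutator :: "'h::chilbert_space set \<Rightarrow> ('h \<Rightarrow> 'h) \<Rightarrow> ('h \<Rightarrow> 'h) \<Rightarrow> ('h \<Rightarrow> 'h)" where
  "commutator domA A S = (THE T. bounded_clinear T \<and>
     (\<forall>\<phi>\<in>domA. cinner \<phi> (T \<phi>) = cinner (A \<phi>) (S \<phi>) - cinner \<phi> (S (A \<phi>))))"

section \<open>Groups (written additively: + is the group law, 0 the identity, - the inverse;
  the law is not assumed commutative)\<close>

fun gen_pow :: "'g::group_add set \<Rightarrow> nat \<Rightarrow> 'g set" where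
  "gen_pow S 0 = {0}"
| "gen_pow S (Suc n) = {a + b | a b. a \<in> S \<and> b \<in> gen_pow S n}"

definition word_length :: "'g::group_add set \<Rightarrow> 'g \<Rightarrow> nat" where
  "word_length Y x = (LEAST n. x \<in> gen_pow (Y \<union> uminus ` Y) n)"

definition compact_generating_set :: "'g::topological_group_add set \<Rightarrow> bool" where
  "compact_generating_set Y \<longleftrightarrow> compact Y \<and> (\<forall>x. \<exists>n. x \<in> gen_pow (Y \<union> uminus ` Y) n)"

definition unitary_rep :: "('g::topological_group_add \<Rightarrow> 'h::chilbert_space \<Rightarrow> 'h) \<Rightarrow> bool" where
  "unitary_rep U \<longleftrightarrow> (\<forall>x. unitary_op (U x)) \<and> U 0 = id \<and>
     (\<forall>x y. U (x + y) = U x \<circ> U y) \<and> (\<forall>\<psi>. continuous_on UNIV (\<lambda>x. U x \<psi>))"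

definition directed_set :: "'j set \<Rightarrow> ('j \<Rightarrow> 'j \<Rightarrow> bool) \<Rightarrow> bool" where
  "directed_set J le \<longleftrightarrow> J \<noteq> {} \<and> (\<forall>j\<in>J. le j j) \<and>
     (\<forall>i\<in>J. \<forall>j\<in>J. \<forall>k\<in>J. le i j \<and> le j k \<longrightarrow> le i k) \<and>
     (\<forall>i\<in>J. \<forall>j\<in>J. \<exists>k\<in>J. le i k \<and> le j k)"

text \<open>The filter of tails of a net indexed by a directed set; convergence of the net
  is convergence along this filter.\<close>

definition net_filter :: "'j set \<Rightarrow> ('j \<Rightarrow> 'j \<Rightarrow> bool) \<Rightarrow> 'j filter" where
  "net_filter J le = (INF j\<in>J. principal {k\<in>J. le j k})"

definition net_diverges :: "'j set \<Rightarrow> ('j \<Rightarrow> 'j \<Rightarrow> bool) \<Rightarrow> ('j \<Rightarrow> 'g::topological_space) \<Rightarrow> bool" where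
  "net_diverges J le x \<longleftrightarrow>
     \<not> (\<exists>p. \<forall>V. open V \<and> p \<in> V \<longrightarrow> (\<forall>j\<in>J. \<exists>k\<in>J. le j k \<and> x k \<in> V))"

end

theory Submission
  imports Defs
begin

text \<open>On the domain of \<open>A\<close> the operator \<open>D\<^sub>j = \<ell>(x\<^sub>j)\<inverse> [A, U(x\<^sub>j)] U(x\<^sub>j)\<inverse>\<close>
  equals \<open>\<ell>(x\<^sub>j)\<inverse> (A - U(x\<^sub>j) A U(x\<^sub>j)\<inverse>)\<close>, so for \<open>\<phi>, \<psi> \<in> dom A\<close> the matrix element
  \<open>\<langle>D\<^sub>j \<phi>, U(x\<^sub>j) \<psi>\<rangle> = \<ell>(x\<^sub>j)\<inverse> (\<langle>A \<phi>, U(x\<^sub>j) \<psi>\<rangle> - \<langle>\<phi>, U(x\<^sub>j) A \<psi>\<rangle>)\<close> is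
  \<open>O(1 / \<ell>(x\<^sub>j))\<close>.  Balls of the word metric are compact and a divergent net leaves every
  compact set, so \<open>\<ell>(x\<^sub>j) \<rightarrow> \<infinity>\<close> and \<open>\<langle>D \<phi>, U(x\<^sub>j) \<psi>\<rangle> \<rightarrow> 0\<close>.  The vectors \<open>w\<close> with
  \<open>\<langle>w, U(x\<^sub>j) \<psi>\<rangle> \<rightarrow> 0\<close> for all \<open>\<psi>\<close> form a closed subspace; it contains the range of the
  bounded symmetric operator \<open>D\<close>, hence \<open>ker(D)\<^sup>\<bottom>\<close>.  For (b), if \<open>e\<^sub>1, \<dots>, e\<^sub>n\<close> is an
  orthonormal basis of an invariant subspace, then \<open>\<parallel>\<phi>\<parallel>\<^sup>2 = \<Sum>\<^sub>k |\<langle>e\<^sub>k, U(x\<^sub>j) \<phi>\<rangle>|\<^sup>2 \<rightarrow> 0\<close>.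

  The regularity \<open>U(y) \<in> C\<^sup>1(A)\<close> passes from the generators to all of \<open>X\<close> because
  \<open>C\<^sup>1(A)\<close> is closed under adjoints and products; it guarantees that \<open>U(g)\<close> preserves
  \<open>dom A\<close> with \<open>[A, U(g)] = A U(g) - U(g) A\<close> there.\<close>

section \<open>Complex inner product spaces\<close>

lemma cinner_add_left: "cinner (x + y) z = cinner x z + cinner y z"
proof -
  have "cinner (x+y) z = cnj (cinner z (x+y))" by (rule cinner_commute)
  also have "\<dots> = cnj (cinner z x) + cnj (cinner z y)" by (simp add: cinner_add_right)
  also have "\<dots> = cinner x z + cinner y z" by (simp add: cinner_commute[of x z] cinner_commute[of y z])
  finally show ?thesis .
qed

lemma cinner_scaleC_left: "cinner (scaleC c x) y = cnj c * cinner x y"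
proof -
  have "cinner (scaleC c x) y = cnj (cinner y (scaleC c x))" by (rule cinner_commute)
  also have "\<dots> = cnj c * cnj (cinner y x)" by (simp add: cinner_scaleC_right)
  also have "\<dots> = cnj c * cinner x y" by (simp add: cinner_commute[of x y])
  finally show ?thesis .
qed

lemma cinner_zero_right [simp]: "cinner x 0 = 0"
  using cinner_add_right[of x 0 0] by simp

lemma cinner_zero_left [simp]: "cinner 0 x = 0"
  using cinner_add_left[of 0 0 x] by simp

lemma scaleR_scaleC: "scaleR r x = scaleC (complex_of_real r) x"
  by (simp add: scaleC_of_real)

lemma scaleC_zero_left [simp]: "scaleC 0 x = 0"
  using scaleC_of_real[of 0 x] by simp

lemma scaleC_zero_right [simp]: "scaleC c 0 = 0"
  using scaleC_add_right[of c 0 0] by simp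

lemma scaleC_minus1: "scaleC (-1) x = - x"
  using scaleC_of_real[of "-1" x] by simp

lemma scaleC_minus_right: "scaleC c (- x) = - scaleC c x"
proof -
  have "scaleC c (- x) = scaleC c (scaleC (-1) x)" by (simp add: scaleC_minus1)
  also have "\<dots> = scaleC (-1) (scaleC c x)" by (simp add: scaleC_scaleC mult.commute)
  finally show ?thesis by (simp add: scaleC_minus1)
qed

lemma scaleC_diff_right: "scaleC c (x - y) = scaleC c x - scaleC c y"
  by (metis diff_conv_add_uminus scaleC_add_right scaleC_minus_right)

lemma cinner_minus_right: "cinner x (- y) = - cinner x y"
  using cinner_scaleC_right[of x "-1" y] by (simp add: scaleC_minus1)

lemma cinner_minus_left: "cinner (- x) y = - cinner x y"
  using cinner_scaleC_left[of "-1" x y] by (simp add: scaleC_minus1)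

lemma cinner_diff_right: "cinner x (y - z) = cinner x y - cinner x z"
  using cinner_add_right[of x y "- z"] by (simp add: cinner_minus_right)

lemma cinner_diff_left: "cinner (x - y) z = cinner x z - cinner y z"
  using cinner_add_left[of x "- y" z] by (simp add: cinner_minus_left)

lemma cinner_sum_right: "cinner x (sum f E) = (\<Sum>e\<in>E. cinner x (f e))"
  by (induction E rule: infinite_finite_induct) (simp_all add: cinner_add_right)

lemma scaleC_sum_right: "scaleC c (sum f E) = (\<Sum>e\<in>E. scaleC c (f e))"
  by (induction E rule: infinite_finite_induct) (simp_all add: scaleC_add_right)

lemma Re_cinner_self: "Re (cinner x x) = (norm x)\<^sup>2"
  by (simp add: cinner_self_norm)

lemma cinner_self_eq_0: "cinner x x = 0 \<longleftrightarrow> x = 0"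
  by (simp add: cinner_self_norm)

lemma norm_scaleC: "norm (scaleC c x) = cmod c * norm x"
proof -
  have "complex_of_real ((norm (scaleC c x))\<^sup>2) = cinner (scaleC c x) (scaleC c x)"
    by (simp add: cinner_self_norm)
  also have "\<dots> = cnj c * c * cinner x x"
    by (simp add: cinner_scaleC_left cinner_scaleC_right)
  also have "\<dots> = complex_of_real ((cmod c)\<^sup>2) * complex_of_real ((norm x)\<^sup>2)"
  proof -
    have "cnj c * c = complex_of_real ((cmod c)\<^sup>2)"
      using complex_norm_square[of c] by (simp only: mult.commute)
    then show ?thesis by (simp only: cinner_self_norm)
  qed
  also have "\<dots> = complex_of_real ((cmod c * norm x)\<^sup>2)"
    by (simp only: of_real_mult[symmetric] power_mult_distrib)
  finally have "(norm (scaleC c x))\<^sup>2 = (cmod c * norm x)\<^sup>2"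
    by (rule of_real_eq_iff[THEN iffD1])
  then show ?thesis
    by (rule power2_eq_imp_eq) simp_all
qed

lemma cinner_Cauchy_Schwarz: "cmod (cinner x y) \<le> norm x * norm y"
proof (cases "y = 0")
  case True then show ?thesis by simp
next
  case False
  define n where "n = (norm y)\<^sup>2"
  have n: "n > 0" using False by (simp add: n_def)
  define a where "a = cinner y x"
  define t where "t = a / complex_of_real n"
  have "0 \<le> Re (cinner (x - scaleC t y) (x - scaleC t y))"
    by (simp add: Re_cinner_self)
  also have "cinner (x - scaleC t y) (x - scaleC t y) =
      cinner x x - t * cinner x y - cnj t * cinner y x + cnj t * t * cinner y y"
    by (simp add: cinner_diff_left cinner_diff_right cinner_scaleC_left cinner_scaleC_right
        algebra_simps)
  also have "\<dots> = cinner x x - complex_of_real ((cmod a)\<^sup>2 / n)"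
  proof -
    have cxy: "cinner x y = cnj a" by (simp add: a_def cinner_commute[of x y])
    have cyy: "cinner y y = complex_of_real n" by (simp add: n_def cinner_self_norm)
    have aa: "cnj a * a = complex_of_real ((cmod a)\<^sup>2)"
      by (metis complex_norm_square mult.commute)
    have "t * cnj a = complex_of_real ((cmod a)\<^sup>2 / n)"
      using aa n by (simp add: t_def mult.commute)
    moreover have "cnj t * a = complex_of_real ((cmod a)\<^sup>2 / n)"
      using aa n by (simp add: t_def)
    moreover have "cnj t * t * complex_of_real n = complex_of_real ((cmod a)\<^sup>2 / n)"
      using aa n by (simp add: t_def field_simps power2_eq_square)
    ultimately show ?thesis unfolding cxy cyy a_def[symmetric] by simp
  qed
  finally have "(cmod a)\<^sup>2 / n \<le> (norm x)\<^sup>2" by (simp add: Re_cinner_self)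
  then have "(cmod a)\<^sup>2 \<le> (norm x)\<^sup>2 * (norm y)\<^sup>2"
    using n by (simp add: n_def field_simps)
  then have "(cmod a)\<^sup>2 \<le> (norm x * norm y)\<^sup>2" by (simp add: power_mult_distrib)
  then have "cmod a \<le> norm x * norm y"
    by (rule power2_le_imp_le) simp
  moreover have "cmod (cinner x y) = cmod a"
    by (simp add: a_def cinner_commute[of x y])
  ultimately show ?thesis by simp
qed

lemma power2_norm_add_cinner: "(norm (x + y))\<^sup>2 = (norm x)\<^sup>2 + 2 * Re (cinner x y) + (norm y)\<^sup>2"
proof -
  have "(norm (x + y))\<^sup>2 = Re (cinner (x+y) (x+y))" by (simp add: Re_cinner_self)
  also have "\<dots> = Re (cinner x x + cinner x y + cinner y x + cinner y y)"
    by (simp add: cinner_add_left cinner_add_right)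
  also have "\<dots> = (norm x)\<^sup>2 + 2 * Re (cinner x y) + (norm y)\<^sup>2"
    by (simp add: Re_cinner_self cinner_commute[of y x])
  finally show ?thesis .
qed

lemma power2_norm_diff_cinner: "(norm (x - y))\<^sup>2 = (norm x)\<^sup>2 - 2 * Re (cinner x y) + (norm y)\<^sup>2"
  using power2_norm_add_cinner[of x "- y"] by (simp add: cinner_minus_right)

lemma parallelogram_law:
  "(norm (a + b))\<^sup>2 + (norm (a - b))\<^sup>2 = 2 * (norm a)\<^sup>2 + 2 * (norm (b :: 'a::complex_inner_space))\<^sup>2"
  by (simp add: power2_norm_add_cinner power2_norm_diff_cinner)

lemma bounded_bilinear_cinner: "bounded_bilinear (cinner :: 'a::complex_inner_space \<Rightarrow> _)"
proof (rule bounded_bilinear.intro)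
  show "\<And>a a' b. cinner (a + a') b = cinner a b + cinner a' b" by (rule cinner_add_left)
  show "\<And>a b b'. cinner a (b + b') = cinner a b + cinner a b'" by (rule cinner_add_right)
  show "\<And>r a b. cinner (scaleR r a) b = scaleR r (cinner a b)"
    by (simp add: scaleR_scaleC cinner_scaleC_left scaleR_conv_of_real)
  show "\<And>r a b. cinner a (scaleR r b) = scaleR r (cinner a b)"
    by (simp add: scaleR_scaleC cinner_scaleC_right scaleR_conv_of_real)
  show "\<exists>K. \<forall>a b. norm (cinner a b) \<le> norm a * norm b * K"
    by (rule exI[of _ 1]) (simp add: cinner_Cauchy_Schwarz)
qed

lemma tendsto_cinner [tendsto_intros]:
  "(f \<longlongrightarrow> a) F \<Longrightarrow> (g \<longlongrightarrow> b) F \<Longrightarrow> ((\<lambda>t. cinner (f t) (g t)) \<longlongrightarrow> cinner a b) F"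
  by (rule bounded_bilinear.tendsto[OF bounded_bilinear_cinner])

lemma continuous_on_cinner [continuous_intros]:
  "continuous_on S f \<Longrightarrow> continuous_on S g \<Longrightarrow> continuous_on S (\<lambda>t. cinner (f t) (g t))"
  by (rule bounded_bilinear.continuous_on[OF bounded_bilinear_cinner])

lemma bounded_linear_scaleC: "bounded_linear (scaleC c :: 'a::complex_inner_space \<Rightarrow> 'a)"
proof
  show "scaleC c (x + y) = scaleC c x + scaleC c y" for x y :: 'a by (rule scaleC_add_right)
  show "scaleC c (scaleR r x) = scaleR r (scaleC c x)" for r and x :: 'a
    by (simp add: scaleR_scaleC scaleC_scaleC mult.commute)
  show "\<exists>K. \<forall>x::'a. norm (scaleC c x) \<le> norm x * K"
    by (rule exI[of _ "cmod c"]) (simp add: norm_scaleC mult.commute)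
qed

lemma continuous_on_scaleC [continuous_intros]:
  "continuous_on S f \<Longrightarrow> continuous_on S (\<lambda>t. scaleC c (f t :: 'a::complex_inner_space))"
  using bounded_linear.continuous_on[OF bounded_linear_scaleC] by blast

lemma csubspace_add: "csubspace S \<Longrightarrow> x \<in> S \<Longrightarrow> y \<in> S \<Longrightarrow> x + y \<in> S"
  unfolding csubspace_def by blast

lemma csubspace_scaleC: "csubspace S \<Longrightarrow> x \<in> S \<Longrightarrow> scaleC c x \<in> S"
  unfolding csubspace_def by blast

lemma csubspace_scaleR: "csubspace S \<Longrightarrow> x \<in> S \<Longrightarrow> scaleR r x \<in> S"
  unfolding csubspace_def by (metis scaleR_scaleC)

lemma csubspace_zero: "csubspace S \<Longrightarrow> 0 \<in> S"
  unfolding csubspace_def by blast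

lemma csubspace_diff: "csubspace S \<Longrightarrow> x \<in> S \<Longrightarrow> y \<in> S \<Longrightarrow> x - y \<in> S"
  unfolding csubspace_def by (metis diff_conv_add_uminus scaleC_minus1)

lemma csubspace_sum: "csubspace V \<Longrightarrow> (\<And>e. e \<in> E \<Longrightarrow> f e \<in> V) \<Longrightarrow> sum f E \<in> V"
  by (induction E rule: infinite_finite_induct) (simp_all add: csubspace_zero csubspace_add)

section \<open>Bounded operators and unitary representations\<close>

lemma bounded_clinear_add: "bounded_clinear f \<Longrightarrow> f (x + y) = f x + f y"
  by (simp add: bounded_clinear_def linear_simps)

lemma bounded_clinear_diff: "bounded_clinear f \<Longrightarrow> f (x - y) = f x - f y"
  by (simp add: bounded_clinear_def linear_simps)

lemma bounded_clinear_zero: "bounded_clinear f \<Longrightarrow> f 0 = 0"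
  by (simp add: bounded_clinear_def linear_simps)

lemma bounded_clinear_scaleC: "bounded_clinear f \<Longrightarrow> f (scaleC c x) = scaleC c (f x)"
  by (simp add: bounded_clinear_def)

lemma bounded_clinear_continuous_on: "bounded_clinear f \<Longrightarrow> continuous_on S f"
  by (simp add: bounded_clinear_def linear_continuous_on)

lemma bounded_clinearI:
  fixes g :: "'a::complex_inner_space \<Rightarrow> 'b::complex_inner_space"
  assumes "\<And>x y. g (x + y) = g x + g y" "\<And>c x. g (scaleC c x) = scaleC c (g x)"
    "\<And>x. norm (g x) \<le> K * norm x"
  shows "bounded_clinear g"
  unfolding bounded_clinear_def
proof
  show "bounded_linear g"
  proof (rule bounded_linear_intro[of _ K])
    show "g (x + y) = g x + g y" for x y by (rule assms(1))
    show "g (scaleR r x) = scaleR r (g x)" for r x by (simp add: scaleR_scaleC assms(2))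
    show "norm (g x) \<le> norm x * K" for x using assms(3)[of x] by (simp add: mult.commute)
  qed
qed (use assms in auto)

lemma bounded_clinear_compose:
  "bounded_clinear S \<Longrightarrow> bounded_clinear V \<Longrightarrow> bounded_clinear (S \<circ> V)"
  unfolding bounded_clinear_def using bounded_linear_compose by (simp add: comp_def) blast

lemma unitary_op_norm: "unitary_op V \<Longrightarrow> norm (V x) = norm x"
proof -
  assume "unitary_op V"
  then have "cinner (V x) (V x) = cinner x x" by (simp add: unitary_op_def)
  then have "complex_of_real ((norm (V x))\<^sup>2) = complex_of_real ((norm x)\<^sup>2)"
    by (simp only: cinner_self_norm)
  then have "(norm (V x))\<^sup>2 = (norm x)\<^sup>2" by (rule of_real_eq_iff[THEN iffD1])
  then show ?thesis by (rule power2_eq_imp_eq) simp_all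
qed

context
  fixes U :: "'g::topological_group_add \<Rightarrow> 'h::chilbert_space \<Rightarrow> 'h"
  assumes U: "unitary_rep U"
begin

lemma unitary_rep_zero: "U 0 = id"
  using U by (simp add: unitary_rep_def)

lemma unitary_rep_add: "U (g + h) = U g \<circ> U h"
  using U by (simp add: unitary_rep_def)

lemma unitary_rep_cancel_left: "U (- g) (U g v) = v"
  using unitary_rep_add[of "- g" g] unitary_rep_zero by (metis add.left_inverse comp_apply id_apply)

lemma unitary_rep_cancel_right: "U g (U (- g) v) = v"
  using unitary_rep_cancel_left[of "- g" v] by simp

lemma unitary_rep_bounded_clinear: "bounded_clinear (U g)"
  using U by (simp add: unitary_rep_def unitary_op_def)

lemma unitary_rep_norm: "norm (U g v) = norm v"
  using U by (simp add: unitary_rep_def unitary_op_norm)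

lemma unitary_rep_cinner: "cinner (U g a) (U g b) = cinner a b"
  using U by (simp add: unitary_rep_def unitary_op_def)

lemma unitary_rep_adjoint: "cinner (U g a) b = cinner a (U (- g) b)"
  by (metis unitary_rep_cinner unitary_rep_cancel_right)

lemma unitary_rep_adjoint': "cinner a (U g b) = cinner (U (- g) a) b"
  using unitary_rep_adjoint[of "- g" a b] by simp

end

section \<open>Density, orthogonal projection and the Riesz representation\<close>

lemma dense_continuous_eq:
  fixes f g :: "'a::topological_space \<Rightarrow> 'b::t2_space"
  assumes "continuous_on UNIV f" "continuous_on UNIV g" "closure S = UNIV"
    "\<And>x. x \<in> S \<Longrightarrow> f x = g x"
  shows "f x = g x"
proof -
  have "closed {x. f x = g x}" by (rule closed_Collect_eq[OF assms(1,2)])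
  moreover have "S \<subseteq> {x. f x = g x}" using assms(4) by blast
  ultimately have "closure S \<subseteq> {x. f x = g x}" by (rule closure_minimal[rotated])
  then show ?thesis using assms(3) by blast
qed

lemma dense_continuous_le:
  fixes f g :: "'a::topological_space \<Rightarrow> real"
  assumes "continuous_on UNIV f" "continuous_on UNIV g" "closure S = UNIV"
    "\<And>x. x \<in> S \<Longrightarrow> f x \<le> g x"
  shows "f x \<le> g x"
proof -
  have "closed {x. f x \<le> g x}" by (rule closed_Collect_le[OF assms(1,2)])
  moreover have "S \<subseteq> {x. f x \<le> g x}" using assms(4) by blast
  ultimately have "closure S \<subseteq> {x. f x \<le> g x}" by (rule closure_minimal[rotated])
  then show ?thesis using assms(3) by blast
qed

lemma dense_orthogonal_eq_0:
  fixes w :: "'a::complex_inner_space"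
  assumes "closure S = UNIV" "\<And>x. x \<in> S \<Longrightarrow> cinner x w = 0"
  shows "w = 0"
proof -
  have "cinner w w = 0"
    by (rule dense_continuous_eq[of "\<lambda>x. cinner x w" "\<lambda>x. 0" S])
       (auto intro!: continuous_intros simp: assms)
  then show ?thesis by (simp add: cinner_self_eq_0)
qed

lemma dense_cinner_bound:
  fixes w :: "'a::complex_inner_space"
  assumes "closure S = UNIV" "\<And>x. x \<in> S \<Longrightarrow> cmod (cinner x w) \<le> M * norm x" "0 \<le> M"
  shows "norm w \<le> M"
proof -
  have *: "cmod (cinner w w) \<le> M * norm w"
    by (rule dense_continuous_le[of "\<lambda>x. cmod (cinner x w)" "\<lambda>x. M * norm x" S])
       (auto intro!: continuous_intros simp: assms)
  have "cmod (cinner w w) = (norm w)\<^sup>2" unfolding cinner_self_norm norm_of_real by simp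
  with * have "norm w * norm w \<le> M * norm w" by (simp add: power2_eq_square)
  then show ?thesis
    using assms(3) by (cases "norm w = 0") (auto simp: mult_le_cancel_right)
qed

lemma dense_scaleC_eq:
  fixes g :: "'a::complex_inner_space \<Rightarrow> 'b::complex_inner_space"
  assumes "continuous_on UNIV g" "closure S = UNIV"
    "\<And>x. x \<in> S \<Longrightarrow> g (scaleC c x) = scaleC c (g x)"
  shows "g (scaleC c x) = scaleC c (g x)"
proof (rule dense_continuous_eq[of "\<lambda>x. g (scaleC c x)" "\<lambda>x. scaleC c (g x)" S])
  show "continuous_on UNIV (\<lambda>x. g (scaleC c x))"
    by (rule continuous_on_compose2[OF assms(1)]) (auto intro!: continuous_intros)
  show "continuous_on UNIV (\<lambda>x. scaleC c (g x))" by (auto intro!: continuous_intros assms(1))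
qed (use assms in auto)

lemma dense_scaleC_eq_functional:
  fixes g :: "'a::complex_inner_space \<Rightarrow> complex"
  assumes "continuous_on UNIV g" "closure S = UNIV" "\<And>x. x \<in> S \<Longrightarrow> g (scaleC c x) = c * g x"
  shows "g (scaleC c x) = c * g x"
proof (rule dense_continuous_eq[of "\<lambda>x. g (scaleC c x)" "\<lambda>x. c * g x" S])
  show "continuous_on UNIV (\<lambda>x. g (scaleC c x))"
    by (rule continuous_on_compose2[OF assms(1)]) (auto intro!: continuous_intros)
  show "continuous_on UNIV (\<lambda>x. c * g x)" by (auto intro!: continuous_intros assms(1))
qed (use assms in auto)

lemma uniformly_continuous_on_additive_bounded:
  fixes f :: "'a::complex_inner_space \<Rightarrow> 'b::real_normed_vector"
  assumes S: "csubspace S"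
    and add: "\<And>x y. x \<in> S \<Longrightarrow> y \<in> S \<Longrightarrow> f (x + y) = f x + f y"
    and bnd: "\<And>x. x \<in> S \<Longrightarrow> norm (f x) \<le> K * norm x" and K: "0 \<le> K"
  shows "uniformly_continuous_on S f"
  unfolding uniformly_continuous_on_def
proof (intro allI impI)
  fix e :: real assume e: "0 < e"
  have fdiff: "f x' - f x = f (x' - x)" if "x \<in> S" "x' \<in> S" for x x'
    using add[of "x' - x" x] that S by (simp add: csubspace_diff)
  show "\<exists>d>0. \<forall>x\<in>S. \<forall>x'\<in>S. dist x' x < d \<longrightarrow> dist (f x') (f x) < e"
  proof (intro exI[of _ "e / (K + 1)"] conjI ballI impI)
    show "0 < e / (K + 1)" using e K by simp
    fix x x' assume xs: "x \<in> S" "x' \<in> S" and d: "dist x' x < e / (K + 1)"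
    have "dist (f x') (f x) = norm (f (x' - x))" using xs by (simp add: dist_norm fdiff)
    also have "\<dots> \<le> K * norm (x' - x)" using xs S by (auto intro!: bnd csubspace_diff)
    also have "\<dots> \<le> K * (e / (K + 1))" using d K by (intro mult_left_mono) (auto simp: dist_norm)
    also have "\<dots> < e" using e K by (simp add: field_simps)
    finally show "dist (f x') (f x) < e" .
  qed
qed

lemma dense_csubspace_extension:
  fixes f :: "'a::complex_inner_space \<Rightarrow> 'b::{real_normed_vector,complete_space}"
  assumes S: "csubspace S" "closure S = UNIV"
    and add: "\<And>x y. x \<in> S \<Longrightarrow> y \<in> S \<Longrightarrow> f (x + y) = f x + f y"
    and bnd: "\<And>x. x \<in> S \<Longrightarrow> norm (f x) \<le> K * norm x" and K: "0 \<le> K"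
  obtains g where "continuous_on UNIV g" "\<And>x y. g (x + y) = g x + g y"
    "\<And>x. norm (g x) \<le> K * norm x" "\<And>x. x \<in> S \<Longrightarrow> g x = f x"
proof -
  obtain g where g: "uniformly_continuous_on (closure S) g" "\<And>x. x \<in> S \<Longrightarrow> f x = g x"
    using uniformly_continuous_on_extension_on_closure
      uniformly_continuous_on_additive_bounded[OF S(1) add bnd K] by metis
  have cg: "continuous_on UNIV g"
    using g(1) S(2) uniformly_continuous_imp_continuous by fastforce
  have gadd: "g (fst p + snd p) = g (fst p) + g (snd p)" for p
  proof (rule dense_continuous_eq[of _ _ "S \<times> S"])
    show "continuous_on UNIV (\<lambda>p. g (fst p + snd p))"
      by (rule continuous_on_compose2[OF cg]) (auto intro!: continuous_intros)
    show "continuous_on UNIV (\<lambda>p. g (fst p) + g (snd p))"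
      by (intro continuous_intros continuous_on_compose2[OF cg]) auto
    show "closure (S \<times> S) = UNIV" by (simp add: closure_Times S(2))
  qed (use g(2) add csubspace_add[OF S(1)] in auto)
  moreover have "norm (g x) \<le> K * norm x" for x
    by (rule dense_continuous_le[of "\<lambda>x. norm (g x)" "\<lambda>x. K * norm x" S])
       (use S(2) bnd g(2) in \<open>auto intro!: continuous_intros cg\<close>)
  ultimately show ?thesis using that[OF cg] gadd[of "(x, y)" for x y] g(2) by simp
qed

lemma parallelogram_midpoint_bound:
  fixes a b :: "'a::complex_inner_space"
  assumes a: "norm a \<le> d + t" and b: "norm b \<le> d + t" and ab: "2 * d \<le> norm (a + b)"
    and d: "0 \<le> d" and t: "0 \<le> t" "t \<le> 1"
  shows "(norm (a - b))\<^sup>2 \<le> (8 * d + 4) * t"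
proof -
  have "(norm (a - b))\<^sup>2 = 2 * (norm a)\<^sup>2 + 2 * (norm b)\<^sup>2 - (norm (a + b))\<^sup>2"
    using parallelogram_law[of a b] by simp
  also have "\<dots> \<le> 2 * (d + t)\<^sup>2 + 2 * (d + t)\<^sup>2 - (2 * d)\<^sup>2"
  proof -
    have "(norm a)\<^sup>2 \<le> (d + t)\<^sup>2" "(norm b)\<^sup>2 \<le> (d + t)\<^sup>2"
      using a b by (auto intro!: power_mono)
    moreover have "(2 * d)\<^sup>2 \<le> (norm (a + b))\<^sup>2"
      using ab d by (intro power_mono) auto
    ultimately show ?thesis by linarith
  qed
  also have "\<dots> = 8 * d * t + 4 * t\<^sup>2" by (simp add: power2_eq_square algebra_simps)
  also have "\<dots> \<le> (8 * d + 4) * t"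
    using t d by (simp add: power2_eq_square algebra_simps mult_left_le)
  finally show ?thesis .
qed

lemma minimizing_sequence_Cauchy:
  fixes x :: "'a::complex_inner_space"
  assumes M: "csubspace M" and d0: "0 \<le> d" and dle: "\<And>y. y \<in> M \<Longrightarrow> d \<le> norm (x - y)"
    and ms: "\<And>n. ms n \<in> M" "\<And>n. norm (x - ms n) < d + inverse (real (Suc n))"
  shows "Cauchy ms"
proof (rule CauchyI)
  fix e :: real assume e: "0 < e"
  obtain N0 :: nat where N0: "(8 * d + 4) / e\<^sup>2 < real N0" using reals_Archimedean2 by blast
  define t where "t = inverse (real (Suc N0))"
  have t: "0 \<le> t" "t \<le> 1" by (auto simp: t_def inverse_le_1_iff)
  have "(8 * d + 4) / e\<^sup>2 < real (Suc N0)" using N0 by simp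
  then have "(8 * d + 4) < e\<^sup>2 * real (Suc N0)" using e by (simp add: field_simps)
  then have tN: "(8 * d + 4) * t < e\<^sup>2" by (simp add: t_def field_simps)
  show "\<exists>K. \<forall>m\<ge>K. \<forall>n\<ge>K. norm (ms m - ms n) < e"
  proof (intro exI[of _ N0] allI impI)
    fix m n assume mn: "N0 \<le> m" "N0 \<le> n"
    have "inverse (real (Suc m)) \<le> t" "inverse (real (Suc n)) \<le> t"
      using mn by (simp_all add: t_def le_imp_inverse_le)
    then have a: "norm (x - ms m) \<le> d + t" and b: "norm (x - ms n) \<le> d + t"
      using ms(2)[of m] ms(2)[of n] by simp_all
    have "scaleR (1/2) (ms m + ms n) \<in> M" by (intro csubspace_scaleR csubspace_add M ms(1))
    moreover have "(x - ms m) + (x - ms n) = scaleR 2 (x - scaleR (1/2) (ms m + ms n))"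
      by (simp add: algebra_simps scaleR_2)
    ultimately have "2 * d \<le> norm ((x - ms m) + (x - ms n))" using dle by fastforce
    from parallelogram_midpoint_bound[OF a b this d0 t]
    have "(norm (ms n - ms m))\<^sup>2 < e\<^sup>2" using tN by simp
    then show "norm (ms m - ms n) < e" using e by (simp add: power_less_imp_less_base norm_minus_commute)
  qed
qed

lemma nearest_point_exists:
  fixes x :: "'h::chilbert_space"
  assumes M: "csubspace M" "closed M"
  obtains m where "m \<in> M" "\<And>y. y \<in> M \<Longrightarrow> norm (x - m) \<le> norm (x - y)"
proof -
  define N where "N = (\<lambda>m. norm (x - m)) ` M"
  define d where "d = Inf N"
  have Nne: "N \<noteq> {}" using csubspace_zero[OF M(1)] by (auto simp: N_def)
  have dle: "d \<le> norm (x - y)" if "y \<in> M" for y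
    unfolding d_def using that by (auto simp: N_def intro!: cInf_lower bdd_belowI[of _ 0])
  have d0: "0 \<le> d" unfolding d_def by (rule cInf_greatest[OF Nne]) (auto simp: N_def)
  have "\<exists>m\<in>M. norm (x - m) < d + inverse (real (Suc n))" for n
  proof -
    have "Inf N < d + inverse (real (Suc n))" by (simp add: d_def)
    then obtain v where "v \<in> N" "v < d + inverse (real (Suc n))" using cInf_lessD[OF Nne] by blast
    then show ?thesis by (auto simp: N_def)
  qed
  then obtain ms where ms: "\<And>n. ms n \<in> M" "\<And>n. norm (x - ms n) < d + inverse (real (Suc n))"
    by metis
  obtain m where lim: "ms \<longlonglongrightarrow> m"
    using minimizing_sequence_Cauchy[OF M(1) d0 dle ms] Cauchy_convergent_iff convergent_def by blast
  have "m \<in> M" using M(2) lim ms(1) closed_sequential_limits by blast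
  moreover have "norm (x - m) \<le> d"
  proof (rule tendsto_le[OF trivial_limit_sequentially])
    show "(\<lambda>n. d + inverse (real (Suc n))) \<longlonglongrightarrow> d"
      using tendsto_add[OF tendsto_const LIMSEQ_inverse_real_of_nat] by simp
    show "(\<lambda>n. norm (x - ms n)) \<longlonglongrightarrow> norm (x - m)" by (intro tendsto_intros lim)
    show "\<forall>\<^sub>F n in sequentially. norm (x - ms n) \<le> d + inverse (real (Suc n))"
      using ms(2) by (intro always_eventually allI less_imp_le) blast
  qed
  ultimately show ?thesis using that dle by force
qed

lemma nearest_point_orthogonal:
  fixes x :: "'a::complex_inner_space"
  assumes M: "csubspace M" and mM: "m \<in> M" and yM: "y \<in> M"
    and nearest: "\<And>y. y \<in> M \<Longrightarrow> norm (x - m) \<le> norm (x - y)"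
  shows "cinner y (x - m) = 0"
proof -
  define z where "z = x - m"
  define a where "a = cinner y z"
  define s where "s = 1 / ((norm y)\<^sup>2 + 1)"
  have p: "0 < (norm y)\<^sup>2 + 1" by (simp add: add_nonneg_pos)
  have s: "0 < s" "s * (norm y)\<^sup>2 \<le> 1" using p by (auto simp: s_def field_simps)
  define w where "w = scaleC (complex_of_real s * a) y"
  \<comment> \<open>compare \<open>m\<close> with the competitor \<open>m + w\<close>, a small step towards the component of \<open>z\<close> along \<open>y\<close>\<close>
  have "m + w \<in> M" unfolding w_def by (intro csubspace_add csubspace_scaleC M mM yM)
  then have "norm z \<le> norm (z - w)" using nearest by (fastforce simp: z_def algebra_simps)
  then have "(norm z)\<^sup>2 \<le> (norm (z - w))\<^sup>2" by (intro power_mono) auto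
  also have "\<dots> = (norm z)\<^sup>2 - 2 * Re (cinner z w) + (norm w)\<^sup>2" by (rule power2_norm_diff_cinner)
  finally have ineq: "2 * Re (cinner z w) \<le> (norm w)\<^sup>2" by simp
  have czy: "cinner z y = cnj a" by (simp add: a_def cinner_commute[of y z])
  have "cinner z w = complex_of_real s * a * cnj a" by (simp add: w_def cinner_scaleC_right czy)
  also have "\<dots> = complex_of_real (s * (cmod a)\<^sup>2)"
    by (simp add: complex_norm_square[symmetric])
  finally have "Re (cinner z w) = s * (cmod a)\<^sup>2" by simp
  moreover have "(norm w)\<^sup>2 = s\<^sup>2 * (cmod a)\<^sup>2 * (norm y)\<^sup>2"
    using s by (simp add: w_def norm_scaleC norm_mult power_mult_distrib)
  ultimately have "2 * s * (cmod a)\<^sup>2 \<le> s * (s * (norm y)\<^sup>2) * (cmod a)\<^sup>2"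
    using ineq by (simp add: power2_eq_square algebra_simps)
  also have "\<dots> \<le> s * 1 * (cmod a)\<^sup>2" using s by (intro mult_right_mono mult_left_mono) auto
  finally have "(cmod a)\<^sup>2 \<le> 0" using s by simp
  then show ?thesis by (simp add: a_def z_def)
qed

lemma orthogonal_projection_exists:
  fixes x :: "'h::chilbert_space"
  assumes M: "csubspace M" "closed M"
  obtains m where "m \<in> M" "\<And>y. y \<in> M \<Longrightarrow> cinner y (x - m) = 0"
  using nearest_point_exists[OF M] nearest_point_orthogonal[OF M(1)] by metis

lemma functional_eq_cinner:
  fixes g :: "'a::complex_inner_space \<Rightarrow> complex"
  assumes add: "\<And>x y. g (x + y) = g x + g y" and hom: "\<And>c x. g (scaleC c x) = c * g x"
    and z: "g z \<noteq> 0" "\<And>y. g y = 0 \<Longrightarrow> cinner y z = 0"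
  shows "g x = cinner (scaleC (cnj (g z / cinner z z)) z) x"
proof -
  have gdiff: "g (x - y) = g x - g y" for x y
    using add[of "x - y" y] by simp
  have "z \<noteq> 0" using z(1) hom[of 0 z] by auto
  then have zz: "cinner z z \<noteq> 0" by (simp add: cinner_self_eq_0)
  define c where "c = g x / g z"
  have "g (x - scaleC c z) = 0" using z(1) by (simp add: gdiff hom c_def)
  then have "cinner (x - scaleC c z) z = 0" by (rule z(2))
  then have "cinner x z = cnj c * cinner z z" by (simp add: cinner_diff_left cinner_scaleC_left)
  then have "cnj (cinner x z) = c * cnj (cinner z z)" by simp
  then have "cinner z x = c * cinner z z" by (simp add: cinner_commute[of x z] cinner_self_norm)
  then have "g x = g z * (cinner z x / cinner z z)" using z(1) zz by (simp add: c_def field_simps)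
  then show ?thesis by (simp add: cinner_scaleC_left)
qed

lemma Riesz_representation:
  fixes g :: "'h::chilbert_space \<Rightarrow> complex"
  assumes add: "\<And>x y. g (x + y) = g x + g y" and hom: "\<And>c x. g (scaleC c x) = c * g x"
    and bnd: "\<And>x. cmod (g x) \<le> K * norm x"
  obtains \<eta> where "\<And>x. g x = cinner \<eta> x"
proof (cases "\<forall>x. g x = 0")
  case True
  then show ?thesis using that[of 0] by simp
next
  case False
  then obtain x0 where x0: "g x0 \<noteq> 0" by blast
  have "bounded_linear g"
    by (rule bounded_linear_intro[of _ K])
       (simp_all add: add hom scaleR_scaleC scaleR_conv_of_real bnd mult.commute)
  then have "closed {x. g x = 0}" by (intro closed_Collect_eq linear_continuous_on continuous_on_const)
  moreover have "csubspace {x. g x = 0}"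
    unfolding csubspace_def using add[of 0 0] by (simp add: add hom)
  \<comment> \<open>a nonzero vector orthogonal to the kernel is found by projecting \<open>x0\<close> onto it\<close>
  ultimately obtain m where m: "g m = 0" "\<And>y. g y = 0 \<Longrightarrow> cinner y (x0 - m) = 0"
    using orthogonal_projection_exists[of "{x. g x = 0}" x0] by auto
  moreover have "g (x0 - m) = g x0" using add[of "x0 - m" m] m(1) by simp
  ultimately show ?thesis
    using that functional_eq_cinner[OF add hom, of "x0 - m"] x0 by metis
qed
lemma cinner_eq_0_of_quadratic_form_eq_0:
  fixes R :: "'a::complex_inner_space \<Rightarrow> 'a"
  assumes add: "\<And>x y. R (x + y) = R x + R y" and hom: "\<And>c x. R (scaleC c x) = scaleC c (R x)"
    and S: "csubspace S" and diag: "\<And>\<phi>. \<phi> \<in> S \<Longrightarrow> cinner \<phi> (R \<phi>) = 0"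
    and \<phi>: "\<phi> \<in> S" and \<psi>: "\<psi> \<in> S"
  shows "cinner \<phi> (R \<psi>) = 0"
proof -
  define a where "a = cinner \<phi> (R \<psi>)"
  define b where "b = cinner \<psi> (R \<phi>)"
  \<comment> \<open>polarization: test the vanishing quadratic form on \<open>\<phi> + \<psi>\<close> and \<open>\<phi> + \<i> \<psi>\<close>\<close>
  have "cinner (\<phi> + \<psi>) (R (\<phi> + \<psi>)) = 0" using \<phi> \<psi> S by (simp add: diag csubspace_add)
  then have 1: "a + b = 0"
    using diag[OF \<phi>] diag[OF \<psi>]
    by (simp add: add cinner_add_left cinner_add_right a_def b_def add.commute)
  have "cinner (\<phi> + scaleC \<i> \<psi>) (R (\<phi> + scaleC \<i> \<psi>)) = 0"
    using \<phi> \<psi> S by (simp add: diag csubspace_add csubspace_scaleC)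
  then have "cinner \<phi> (R \<phi>) + \<i> * a - \<i> * b + cinner \<psi> (R \<psi>) = 0"
    by (simp add: add hom cinner_add_left cinner_add_right cinner_scaleC_left
        cinner_scaleC_right a_def b_def algebra_simps)
  then have "\<i> * a - \<i> * b = 0" using diag[OF \<phi>] diag[OF \<psi>] by simp
  moreover from 1 have "b = - a" by (simp add: eq_neg_iff_add_eq_0 add.commute)
  ultimately have "2 * \<i> * a = 0" by (simp add: algebra_simps)
  then show ?thesis by (simp add: a_def)
qed

lemma bounded_clinear_eqI_quadratic_form:
  fixes T T' :: "'a::complex_inner_space \<Rightarrow> 'a"
  assumes T: "bounded_clinear T" "bounded_clinear T'"
    and S: "csubspace S" "closure S = UNIV"
    and diag: "\<And>\<phi>. \<phi> \<in> S \<Longrightarrow> cinner \<phi> (T \<phi>) = cinner \<phi> (T' \<phi>)"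
  shows "T = T'"
proof -
  define R where "R = (\<lambda>x. T' x - T x)"
  have "cinner \<phi> (R \<psi>) = 0" if "\<phi> \<in> S" "\<psi> \<in> S" for \<phi> \<psi>
  proof (rule cinner_eq_0_of_quadratic_form_eq_0[OF _ _ S(1) _ that])
    show "R (x + y) = R x + R y" for x y
      by (simp add: R_def bounded_clinear_add[OF T(1)] bounded_clinear_add[OF T(2)])
    show "R (scaleC c x) = scaleC c (R x)" for c x
      by (simp add: R_def bounded_clinear_scaleC[OF T(1)] bounded_clinear_scaleC[OF T(2)]
          scaleC_diff_right)
    show "cinner \<phi> (R \<phi>) = 0" if "\<phi> \<in> S" for \<phi>
      using diag[OF that] by (simp add: R_def cinner_diff_right)
  qed
  then have R0: "R \<psi> = 0" if "\<psi> \<in> S" for \<psi>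
    using dense_orthogonal_eq_0[OF S(2)] that by blast
  have Rcont: "continuous_on UNIV R"
    unfolding R_def by (intro continuous_intros bounded_clinear_continuous_on T)
  have "R x = 0" for x
    by (rule dense_continuous_eq[OF Rcont continuous_on_const S(2)]) (rule R0)
  then show ?thesis by (auto simp: R_def)
qed

section \<open>Self-adjoint operators and the regularity class \<open>C\<^sup>1(A)\<close>\<close>

locale self_adjoint_operator =
  fixes domA :: "'h::chilbert_space set" and A :: "'h \<Rightarrow> 'h"
  assumes self_adjoint: "self_adjoint domA A"
begin

lemma dom_csubspace: "csubspace domA"
  using self_adjoint unfolding self_adjoint_def by blast

lemma dom_dense: "closure domA = UNIV"
  using self_adjoint unfolding self_adjoint_def by blast

lemma dom_add: "x \<in> domA \<Longrightarrow> y \<in> domA \<Longrightarrow> x + y \<in> domA"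
  by (rule csubspace_add[OF dom_csubspace])

lemma dom_scaleC: "x \<in> domA \<Longrightarrow> scaleC c x \<in> domA"
  by (rule csubspace_scaleC[OF dom_csubspace])

lemma A_add: "x \<in> domA \<Longrightarrow> y \<in> domA \<Longrightarrow> A (x + y) = A x + A y"
  using self_adjoint unfolding self_adjoint_def by blast

lemma A_scaleC: "x \<in> domA \<Longrightarrow> A (scaleC c x) = scaleC c (A x)"
  using self_adjoint unfolding self_adjoint_def by blast

lemma A_zero: "A 0 = 0"
  using A_scaleC[OF csubspace_zero[OF dom_csubspace], of 0] by simp

lemma A_symmetric: "x \<in> domA \<Longrightarrow> y \<in> domA \<Longrightarrow> cinner (A x) y = cinner x (A y)"
  using self_adjoint unfolding self_adjoint_def by blast

lemma A_adjointI:
  assumes "\<And>\<phi>. \<phi> \<in> domA \<Longrightarrow> cinner (A \<phi>) \<psi> = cinner \<phi> \<eta>"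
  shows "\<psi> \<in> domA" "A \<psi> = \<eta>"
  using self_adjoint assms unfolding self_adjoint_def by blast+

definition comm_form :: "('h \<Rightarrow> 'h) \<Rightarrow> 'h \<Rightarrow> 'h \<Rightarrow> complex" where
  "comm_form S \<phi> \<psi> = cinner (A \<phi>) (S \<psi>) - cinner \<phi> (S (A \<psi>))"

context
  fixes S :: "'h \<Rightarrow> 'h"
  assumes S: "bounded_clinear S"
begin

lemma comm_form_add_left:
  "\<phi> \<in> domA \<Longrightarrow> \<phi>' \<in> domA \<Longrightarrow> comm_form S (\<phi> + \<phi>') \<psi> = comm_form S \<phi> \<psi> + comm_form S \<phi>' \<psi>"
  by (simp add: comm_form_def A_add cinner_add_left)

lemma comm_form_add_right:
  "\<psi> \<in> domA \<Longrightarrow> \<psi>' \<in> domA \<Longrightarrow> comm_form S \<phi> (\<psi> + \<psi>') = comm_form S \<phi> \<psi> + comm_form S \<phi> \<psi>'"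
  by (simp add: comm_form_def A_add cinner_add_right bounded_clinear_add[OF S])

lemma comm_form_scaleC_left:
  "\<phi> \<in> domA \<Longrightarrow> comm_form S (scaleC c \<phi>) \<psi> = cnj c * comm_form S \<phi> \<psi>"
  by (simp add: comm_form_def A_scaleC cinner_scaleC_left algebra_simps)

lemma comm_form_scaleC_right:
  "\<psi> \<in> domA \<Longrightarrow> comm_form S \<phi> (scaleC c \<psi>) = c * comm_form S \<phi> \<psi>"
  by (simp add: comm_form_def A_scaleC cinner_scaleC_right bounded_clinear_scaleC[OF S] algebra_simps)

lemma comm_form_zero_left [simp]: "comm_form S 0 \<psi> = 0"
  by (simp add: comm_form_def A_zero)

lemma comm_form_zero_right [simp]: "comm_form S \<phi> 0 = 0"
  by (simp add: comm_form_def A_zero bounded_clinear_zero[OF S])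

lemma comm_form_polarization:
  assumes "\<phi> \<in> domA" "\<psi> \<in> domA"
  shows "2 * comm_form S \<phi> \<psi> =
    (comm_form S (\<phi> + \<psi>) (\<phi> + \<psi>) - comm_form S \<phi> \<phi> - comm_form S \<psi> \<psi>)
    - \<i> * (comm_form S (\<phi> + scaleC \<i> \<psi>) (\<phi> + scaleC \<i> \<psi>) - comm_form S \<phi> \<phi> - comm_form S \<psi> \<psi>)"
proof -
  have i\<psi>: "scaleC \<i> \<psi> \<in> domA" using assms(2) by (rule dom_scaleC)
  have P1: "comm_form S (\<phi> + \<psi>) (\<phi> + \<psi>) - comm_form S \<phi> \<phi> - comm_form S \<psi> \<psi> =
      comm_form S \<phi> \<psi> + comm_form S \<psi> \<phi>"
    using assms by (simp add: comm_form_add_left comm_form_add_right dom_add)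
  have "comm_form S (\<phi> + scaleC \<i> \<psi>) (\<phi> + scaleC \<i> \<psi>) =
      comm_form S \<phi> (\<phi> + scaleC \<i> \<psi>) + comm_form S (scaleC \<i> \<psi>) (\<phi> + scaleC \<i> \<psi>)"
    using assms i\<psi> by (simp only: comm_form_add_left)
  also have "comm_form S \<phi> (\<phi> + scaleC \<i> \<psi>) = comm_form S \<phi> \<phi> + \<i> * comm_form S \<phi> \<psi>"
    using assms i\<psi> by (simp only: comm_form_add_right comm_form_scaleC_right)
  also have "comm_form S (scaleC \<i> \<psi>) (\<phi> + scaleC \<i> \<psi>) = cnj \<i> * (comm_form S \<psi> \<phi> + \<i> * comm_form S \<psi> \<psi>)"
    using assms i\<psi>
    by (simp only: comm_form_scaleC_left comm_form_add_right comm_form_scaleC_right) (simp add: algebra_simps)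
  finally have P2: "comm_form S (\<phi> + scaleC \<i> \<psi>) (\<phi> + scaleC \<i> \<psi>) - comm_form S \<phi> \<phi> - comm_form S \<psi> \<psi> =
      \<i> * comm_form S \<phi> \<psi> - \<i> * comm_form S \<psi> \<phi>"
    by (simp add: algebra_simps)
  show ?thesis unfolding P1 P2 by (simp add: algebra_simps)
qed

lemma comm_form_unit_ball_bound:
  assumes C: "\<And>u. u \<in> domA \<Longrightarrow> cmod (comm_form S u u) \<le> C * (norm u)\<^sup>2" "0 \<le> C"
    and ph: "\<phi> \<in> domA" "\<psi> \<in> domA" "norm \<phi> \<le> 1" "norm \<psi> \<le> 1"
  shows "cmod (comm_form S \<phi> \<psi>) \<le> 6 * C"
proof -
  have diag: "cmod (comm_form S u u) \<le> C * r\<^sup>2" if "u \<in> domA" "norm u \<le> r" for u r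
    using C(1)[OF that(1)] mult_left_mono[OF power_mono[OF that(2)] C(2), of 2] by simp
  have triangle3: "cmod (a - b - c) \<le> cmod a + cmod b + cmod c" for a b c :: complex
    using norm_triangle_ineq4[of "a - b" c] norm_triangle_ineq4[of a b] by linarith
  define P1 where "P1 = comm_form S (\<phi> + \<psi>) (\<phi> + \<psi>) - comm_form S \<phi> \<phi> - comm_form S \<psi> \<psi>"
  define P2 where
    "P2 = comm_form S (\<phi> + scaleC \<i> \<psi>) (\<phi> + scaleC \<i> \<psi>) - comm_form S \<phi> \<phi> - comm_form S \<psi> \<psi>"
  have "norm (\<phi> + \<psi>) \<le> 2" "norm (\<phi> + scaleC \<i> \<psi>) \<le> 2"
    using ph norm_triangle_ineq[of \<phi> \<psi>] norm_triangle_ineq[of \<phi> "scaleC \<i> \<psi>"]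
    by (simp_all add: norm_scaleC)
  then have "cmod (comm_form S (\<phi> + \<psi>) (\<phi> + \<psi>)) \<le> 4 * C"
    "cmod (comm_form S (\<phi> + scaleC \<i> \<psi>) (\<phi> + scaleC \<i> \<psi>)) \<le> 4 * C"
    using diag[of "\<phi> + \<psi>" 2] diag[of "\<phi> + scaleC \<i> \<psi>" 2] ph
    by (simp_all add: dom_add dom_scaleC)
  moreover have "cmod (comm_form S \<phi> \<phi>) \<le> C" "cmod (comm_form S \<psi> \<psi>) \<le> C"
    using diag[of \<phi> 1] diag[of \<psi> 1] ph by simp_all
  ultimately have "cmod P1 \<le> 6 * C" "cmod P2 \<le> 6 * C"
    unfolding P1_def P2_def
    using triangle3[of "comm_form S (\<phi> + \<psi>) (\<phi> + \<psi>)" "comm_form S \<phi> \<phi>" "comm_form S \<psi> \<psi>"]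
      triangle3[of "comm_form S (\<phi> + scaleC \<i> \<psi>) (\<phi> + scaleC \<i> \<psi>)" "comm_form S \<phi> \<phi>"
        "comm_form S \<psi> \<psi>"]
    by linarith+
  moreover have "cmod (P1 - \<i> * P2) \<le> cmod P1 + cmod P2"
    using norm_triangle_ineq4[of P1 "\<i> * P2"] by (simp add: norm_mult)
  moreover have "2 * comm_form S \<phi> \<psi> = P1 - \<i> * P2"
    unfolding P1_def P2_def by (rule comm_form_polarization[OF ph(1,2)])
  ultimately have "cmod (2 * comm_form S \<phi> \<psi>) \<le> 12 * C" by simp
  then show ?thesis by (simp add: norm_mult)
qed

end

lemma C1_comm_form_diag_bound:
  assumes "C1 domA A S"
  obtains C where "C \<ge> 0" "\<And>\<phi>. \<phi> \<in> domA \<Longrightarrow> cmod (comm_form S \<phi> \<phi>) \<le> C * (norm \<phi>)\<^sup>2"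
proof -
  have S: "bounded_clinear S" and cont: "continuous_on domA (\<lambda>\<phi>. comm_form S \<phi> \<phi>)"
    using assms unfolding C1_def comm_form_def by blast+
  obtain d where d: "d > 0"
    "\<And>x'. x' \<in> domA \<Longrightarrow> dist x' 0 < d \<Longrightarrow> dist (comm_form S x' x') (comm_form S 0 0) < 1"
    using cont csubspace_zero[OF dom_csubspace] unfolding continuous_on_iff by (metis zero_less_one)
  \<comment> \<open>continuity at \<open>0\<close> plus homogeneity of degree two\<close>
  have "cmod (comm_form S \<phi> \<phi>) \<le> (4 / d\<^sup>2) * (norm \<phi>)\<^sup>2" if ph: "\<phi> \<in> domA" for \<phi>
  proof (cases "\<phi> = 0")
    case True then show ?thesis by (simp add: S)
  next
    case False
    define t where "t = d / (2 * norm \<phi>)"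
    have t: "t > 0" using False d by (simp add: t_def)
    define \<phi>' where "\<phi>' = scaleC (complex_of_real t) \<phi>"
    have ph': "\<phi>' \<in> domA" by (simp add: \<phi>'_def dom_scaleC ph)
    have "norm \<phi>' = t * norm \<phi>" using t by (simp add: \<phi>'_def norm_scaleC)
    also have "\<dots> = d / 2" using False by (simp add: t_def)
    finally have "norm \<phi>' = d / 2" .
    then have "cmod (comm_form S \<phi>' \<phi>') < 1" using d ph' by (simp add: S dist_norm)
    moreover have "comm_form S \<phi>' \<phi>' = complex_of_real (t\<^sup>2) * comm_form S \<phi> \<phi>"
      by (simp add: \<phi>'_def comm_form_scaleC_left comm_form_scaleC_right S ph dom_scaleC
          power2_eq_square)
    ultimately have "t\<^sup>2 * cmod (comm_form S \<phi> \<phi>) < 1" using t by (simp add: norm_mult norm_power)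
    then have "cmod (comm_form S \<phi> \<phi>) < 1 / t\<^sup>2" using t by (simp add: field_simps)
    also have "1 / t\<^sup>2 = (4 / d\<^sup>2) * (norm \<phi>)\<^sup>2"
      using d by (simp add: t_def field_simps power2_eq_square)
    finally show ?thesis by simp
  qed
  then show ?thesis using that[of "4 / d\<^sup>2"] by simp
qed

lemma C1_comm_form_bound:
  assumes "C1 domA A S"
  obtains C where "C \<ge> 0"
    "\<And>\<phi> \<psi>. \<phi> \<in> domA \<Longrightarrow> \<psi> \<in> domA \<Longrightarrow> cmod (comm_form S \<phi> \<psi>) \<le> C * norm \<phi> * norm \<psi>"
proof -
  have S: "bounded_clinear S" using assms by (simp add: C1_def)
  obtain C where C: "C \<ge> 0" "\<And>\<phi>. \<phi> \<in> domA \<Longrightarrow> cmod (comm_form S \<phi> \<phi>) \<le> C * (norm \<phi>)\<^sup>2"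
    using C1_comm_form_diag_bound[OF assms] by blast
  have unit: "cmod (comm_form S u v) \<le> 6 * C"
    if "u \<in> domA" "v \<in> domA" "norm u \<le> 1" "norm v \<le> 1" for u v
    using comm_form_unit_ball_bound[OF S C(2) C(1) that] .
  have "cmod (comm_form S \<phi> \<psi>) \<le> 6 * C * norm \<phi> * norm \<psi>"
    if ph: "\<phi> \<in> domA" "\<psi> \<in> domA" for \<phi> \<psi>
  proof (cases "\<phi> = 0 \<or> \<psi> = 0")
    case True then show ?thesis by (auto simp: S)
  next
    case False
    then have nz: "norm \<phi> > 0" "norm \<psi> > 0" by auto
    define u where "u = scaleC (complex_of_real (1 / norm \<phi>)) \<phi>"
    define v where "v = scaleC (complex_of_real (1 / norm \<psi>)) \<psi>"
    have uv: "u \<in> domA" "v \<in> domA" using ph by (simp_all add: u_def v_def dom_scaleC)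
    have nu: "norm u = 1" "norm v = 1"
      using nz by (simp_all add: u_def v_def norm_scaleC norm_divide)
    have pu: "\<phi> = scaleC (complex_of_real (norm \<phi>)) u"
      and pv: "\<psi> = scaleC (complex_of_real (norm \<psi>)) v"
      using nz by (simp_all add: u_def v_def scaleC_scaleC scaleC_one)
    have "comm_form S \<phi> \<psi> = complex_of_real (norm \<phi> * norm \<psi>) * comm_form S u v"
      by (subst pu, subst pv) (simp add: comm_form_scaleC_left comm_form_scaleC_right S uv dom_scaleC)
    then have "cmod (comm_form S \<phi> \<psi>) = norm \<phi> * norm \<psi> * cmod (comm_form S u v)"
      by (simp add: norm_mult abs_mult)
    also have "\<dots> \<le> norm \<phi> * norm \<psi> * (6 * C)"
      using unit[OF uv] nu by (intro mult_left_mono) auto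
    finally show ?thesis by (simp add: algebra_simps)
  qed
  then show ?thesis using that[of "6 * C"] C(1) by simp
qed

lemma C1_comm_form_representation:
  assumes c1: "C1 domA A S" and \<psi>: "\<psi> \<in> domA"
    and C: "C \<ge> 0"
      "\<And>\<phi> \<psi>. \<phi> \<in> domA \<Longrightarrow> \<psi> \<in> domA \<Longrightarrow> cmod (comm_form S \<phi> \<psi>) \<le> C * norm \<phi> * norm \<psi>"
  obtains \<eta> where "\<And>\<phi>. \<phi> \<in> domA \<Longrightarrow> comm_form S \<phi> \<psi> = cinner \<phi> \<eta>" "norm \<eta> \<le> C * norm \<psi>"
proof -
  have S: "bounded_clinear S" using c1 by (simp add: C1_def)
  define f where "f = (\<lambda>\<phi>. cnj (comm_form S \<phi> \<psi>))"
  have fadd: "f (x + y) = f x + f y" if "x \<in> domA" "y \<in> domA" for x y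
    using that by (simp add: f_def comm_form_add_left S)
  have fbnd: "norm (f x) \<le> (C * norm \<psi>) * norm x" if "x \<in> domA" for x
    using C(2)[OF that \<psi>] by (simp add: f_def algebra_simps)
  obtain g where g: "continuous_on UNIV g" "\<And>x y. g (x + y) = g x + g y"
      "\<And>x. norm (g x) \<le> (C * norm \<psi>) * norm x" "\<And>x. x \<in> domA \<Longrightarrow> g x = f x"
    using dense_csubspace_extension[OF dom_csubspace dom_dense, of f "C * norm \<psi>"] fadd fbnd C(1)
    by auto
  have ghom: "g (scaleC c x) = c * g x" for c x
    by (rule dense_scaleC_eq_functional[OF g(1) dom_dense])
       (simp add: g(4) dom_scaleC f_def comm_form_scaleC_left S)
  obtain \<eta> where \<eta>: "\<And>x. g x = cinner \<eta> x"
    using Riesz_representation[of g "C * norm \<psi>"] g(2,3) ghom by blast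
  have B\<eta>: "comm_form S \<phi> \<psi> = cinner \<phi> \<eta>" if "\<phi> \<in> domA" for \<phi>
  proof -
    have "cnj (comm_form S \<phi> \<psi>) = cinner \<eta> \<phi>" using g(4)[OF that] \<eta>[of \<phi>] by (simp add: f_def)
    then show ?thesis by (metis cinner_commute complex_cnj_cnj)
  qed
  moreover have "norm \<eta> \<le> C * norm \<psi>"
  proof (rule dense_cinner_bound[OF dom_dense])
    show "cmod (cinner \<phi> \<eta>) \<le> C * norm \<psi> * norm \<phi>" if "\<phi> \<in> domA" for \<phi>
      using C(2)[OF that \<psi>] B\<eta>[OF that] by (simp add: algebra_simps)
  qed (use C(1) in simp)
  ultimately show ?thesis using that by blast
qed

lemma C1_commutator_bound:
  assumes c1: "C1 domA A S"
  obtains C where "C \<ge> 0" "\<And>\<psi>. \<psi> \<in> domA \<Longrightarrow> S \<psi> \<in> domA"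
    "\<And>\<psi>. \<psi> \<in> domA \<Longrightarrow> norm (A (S \<psi>) - S (A \<psi>)) \<le> C * norm \<psi>"
proof -
  obtain C where C: "C \<ge> 0"
    "\<And>\<phi> \<psi>. \<phi> \<in> domA \<Longrightarrow> \<psi> \<in> domA \<Longrightarrow> cmod (comm_form S \<phi> \<psi>) \<le> C * norm \<phi> * norm \<psi>"
    using C1_comm_form_bound[OF c1] by blast
  have "S \<psi> \<in> domA \<and> norm (A (S \<psi>) - S (A \<psi>)) \<le> C * norm \<psi>" if \<psi>: "\<psi> \<in> domA" for \<psi>
  proof -
    obtain \<eta> where \<eta>: "\<And>\<phi>. \<phi> \<in> domA \<Longrightarrow> comm_form S \<phi> \<psi> = cinner \<phi> \<eta>" "norm \<eta> \<le> C * norm \<psi>"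
      using C1_comm_form_representation[OF c1 \<psi> C] by blast
    \<comment> \<open>\<open>\<langle>A \<phi>, S \<psi>\<rangle> = \<langle>\<phi>, S A \<psi> + \<eta>\<rangle>\<close> on \<open>dom A\<close>, so \<open>S \<psi> \<in> dom A\<^sup>* = dom A\<close>\<close>
    have "cinner (A \<phi>) (S \<psi>) = cinner \<phi> (S (A \<psi>) + \<eta>)" if "\<phi> \<in> domA" for \<phi>
      using \<eta>(1)[OF that] by (simp add: comm_form_def cinner_add_right algebra_simps)
    then have "S \<psi> \<in> domA" "A (S \<psi>) = S (A \<psi>) + \<eta>" by (blast intro: A_adjointI)+
    then show ?thesis using \<eta>(2) by simp
  qed
  then show ?thesis using that C(1) by blast
qed

lemma C1_commutator:
  assumes c1: "C1 domA A S"
  shows C1_dom_invariant: "\<And>\<psi>. \<psi> \<in> domA \<Longrightarrow> S \<psi> \<in> domA"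
    and bounded_clinear_commutator: "bounded_clinear (commutator domA A S)"
    and commutator_eq: "\<And>\<psi>. \<psi> \<in> domA \<Longrightarrow> commutator domA A S \<psi> = A (S \<psi>) - S (A \<psi>)"
proof -
  have S: "bounded_clinear S" using c1 by (simp add: C1_def)
  obtain C where C: "C \<ge> 0" "\<And>\<psi>. \<psi> \<in> domA \<Longrightarrow> S \<psi> \<in> domA"
    "\<And>\<psi>. \<psi> \<in> domA \<Longrightarrow> norm (A (S \<psi>) - S (A \<psi>)) \<le> C * norm \<psi>"
    using C1_commutator_bound[OF c1] by blast
  define f where "f = (\<lambda>\<psi>. A (S \<psi>) - S (A \<psi>))"
  obtain T where T: "continuous_on UNIV T" "\<And>x y. T (x + y) = T x + T y"
      "\<And>x. norm (T x) \<le> C * norm x" "\<And>x. x \<in> domA \<Longrightarrow> T x = f x"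
    using dense_csubspace_extension[OF dom_csubspace dom_dense, of f C] C
    by (auto simp: f_def bounded_clinear_add[OF S] A_add)
  have "T (scaleC c x) = scaleC c (T x)" for c x
    by (rule dense_scaleC_eq[OF T(1) dom_dense])
       (simp add: T(4) dom_scaleC f_def bounded_clinear_scaleC[OF S] A_scaleC C(2) scaleC_diff_right)
  then have Tb: "bounded_clinear T" by (rule bounded_clinearI[OF T(2) _ T(3)])
  have Tdiag: "cinner \<phi> (T \<phi>) = cinner (A \<phi>) (S \<phi>) - cinner \<phi> (S (A \<phi>))" if "\<phi> \<in> domA" for \<phi>
    using that by (simp add: T(4) f_def C(2) cinner_diff_right A_symmetric)
  have "commutator domA A S = T"
    unfolding commutator_def
  proof (rule the_equality)
    fix T'
    assume "bounded_clinear T' \<and>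
      (\<forall>\<phi>\<in>domA. cinner \<phi> (T' \<phi>) = cinner (A \<phi>) (S \<phi>) - cinner \<phi> (S (A \<phi>)))"
    then show "T' = T"
      using Tb Tdiag by (intro bounded_clinear_eqI_quadratic_form[OF _ _ dom_csubspace dom_dense]) auto
  qed (use Tb Tdiag in blast)
  then show "bounded_clinear (commutator domA A S)"
    and "\<And>\<psi>. \<psi> \<in> domA \<Longrightarrow> commutator domA A S \<psi> = A (S \<psi>) - S (A \<psi>)"
    using Tb T(4) by (simp_all add: f_def)
  show "\<And>\<psi>. \<psi> \<in> domA \<Longrightarrow> S \<psi> \<in> domA" by (rule C(2))
qed

lemma C1_id: "C1 domA A id"
  unfolding C1_def
proof
  show "bounded_clinear (id :: 'h \<Rightarrow> 'h)" by (rule bounded_clinearI[of _ 1]) auto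
  show "continuous_on domA (\<lambda>\<phi>. cinner (A \<phi>) (id \<phi>) - cinner \<phi> (id (A \<phi>)))"
    by (rule continuous_on_cong[THEN iffD1, OF refl _ continuous_on_const[of _ 0]])
       (simp add: A_symmetric)
qed

lemma C1_compose:
  assumes cS: "C1 domA A S" and cV: "C1 domA A V"
  shows "C1 domA A (S \<circ> V)"
  unfolding C1_def
proof
  have S: "bounded_clinear S" and V: "bounded_clinear V" using cS cV by (simp_all add: C1_def)
  then show "bounded_clinear (S \<circ> V)" by (rule bounded_clinear_compose)
  note cs = C1_commutator[OF cS] and cv = C1_commutator[OF cV]
  \<comment> \<open>the Leibniz rule \<open>[A, S V] = [A, S] V + S [A, V]\<close> exhibits the form as a bounded one\<close>
  have "continuous_on domA
      (\<lambda>\<phi>. cinner \<phi> (commutator domA A S (V \<phi>) + S (commutator domA A V \<phi>)))"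
    by (intro continuous_intros continuous_on_compose2[OF bounded_clinear_continuous_on[OF cs(2)]]
        bounded_clinear_continuous_on V continuous_on_compose2[OF bounded_clinear_continuous_on[OF S]]
        bounded_clinear_continuous_on[OF cv(2)]) auto
  moreover have "cinner \<phi> (commutator domA A S (V \<phi>) + S (commutator domA A V \<phi>)) =
      cinner (A \<phi>) ((S \<circ> V) \<phi>) - cinner \<phi> ((S \<circ> V) (A \<phi>))" if \<phi>: "\<phi> \<in> domA" for \<phi>
  proof -
    have "commutator domA A S (V \<phi>) + S (commutator domA A V \<phi>) = A (S (V \<phi>)) - S (V (A \<phi>))"
      using cs(3)[OF cv(1)[OF \<phi>]] cv(3)[OF \<phi>] by (simp add: bounded_clinear_diff[OF S])
    then show ?thesis using A_symmetric[OF \<phi> cs(1)[OF cv(1)[OF \<phi>]]] by (simp add: cinner_diff_right)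
  qed
  ultimately show "continuous_on domA (\<lambda>\<phi>. cinner (A \<phi>) ((S \<circ> V) \<phi>) - cinner \<phi> ((S \<circ> V) (A \<phi>)))"
    by (rule continuous_on_eq)
qed

lemma C1_unitary_rep_uminus:
  assumes U: "unitary_rep U" and c1: "C1 domA A (U g)"
  shows "C1 domA A (U (- g))"
  unfolding C1_def
proof
  show "bounded_clinear (U (- g))" by (rule unitary_rep_bounded_clinear[OF U])
  have "continuous_on domA (\<lambda>\<phi>. - cnj (cinner (A \<phi>) (U g \<phi>) - cinner \<phi> (U g (A \<phi>))))"
    using c1 by (intro continuous_on_minus continuous_on_cnj) (simp add: C1_def)
  moreover have "- cnj (cinner (A \<phi>) (U g \<phi>) - cinner \<phi> (U g (A \<phi>))) =
      cinner (A \<phi>) (U (- g) \<phi>) - cinner \<phi> (U (- g) (A \<phi>))" for \<phi>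
    using unitary_rep_adjoint'[OF U, of "A \<phi>" "- g" \<phi>] unitary_rep_adjoint'[OF U, of \<phi> "- g" "A \<phi>"]
    by (simp add: cinner_commute[of "U g (A \<phi>)" \<phi>] cinner_commute[of "U g \<phi>" "A \<phi>"])
  ultimately show "continuous_on domA (\<lambda>\<phi>. cinner (A \<phi>) (U (- g) \<phi>) - cinner \<phi> (U (- g) (A \<phi>)))"
    by simp
qed

lemma C1_unitary_rep_generated:
  assumes U: "unitary_rep U" and Y: "compact_generating_set Y" and c1: "\<forall>y\<in>Y. C1 domA A (U y)"
  shows "C1 domA A (U g)"
proof -
  have "C1 domA A (U g)" if "g \<in> gen_pow (Y \<union> uminus ` Y) n" for n g
    using that
  proof (induction n arbitrary: g)
    case 0
    then have "U g = id" by (simp add: unitary_rep_zero[OF U])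
    then show ?case using C1_id by (simp only:)
  next
    case (Suc n)
    then obtain a b where ab: "g = a + b" "a \<in> Y \<union> uminus ` Y" "b \<in> gen_pow (Y \<union> uminus ` Y) n"
      by auto
    have "C1 domA A (U a)" using ab(2) c1 C1_unitary_rep_uminus[OF U] by auto
    then show ?case
      using C1_compose[OF _ Suc.IH[OF ab(3)]] by (simp only: ab(1) unitary_rep_add[OF U])
  qed
  then show ?thesis using Y unfolding compact_generating_set_def by blast
qed

end

section \<open>Nets and word length\<close>

lemma eventually_net_filter:
  assumes "directed_set J le"
  shows "eventually P (net_filter J le) \<longleftrightarrow> (\<exists>j\<in>J. \<forall>k\<in>J. le j k \<longrightarrow> P k)"
proof -
  have ne: "J \<noteq> {}" using assms by (simp add: directed_set_def)
  have "eventually P (INF j\<in>J. principal {k\<in>J. le j k}) \<longleftrightarrow>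
      (\<exists>j\<in>J. eventually P (principal {k\<in>J. le j k}))"
  proof (rule eventually_INF_base[OF ne])
    fix a b assume ab: "a \<in> J" "b \<in> J"
    then obtain k where k: "k \<in> J" "le a k" "le b k" using assms unfolding directed_set_def by blast
    have "{l\<in>J. le k l} \<subseteq> {l\<in>J. le a l} \<inter> {l\<in>J. le b l}"
      using assms ab k unfolding directed_set_def by blast
    then show "\<exists>x\<in>J. principal {k\<in>J. le x k} \<le> inf (principal {k\<in>J. le a k}) (principal {k\<in>J. le b k})"
      using k(1) by (intro bexI[of _ k]) (auto simp: inf_principal)
  qed
  then show ?thesis by (auto simp: net_filter_def eventually_principal)
qed

lemma net_filter_neq_bot:
  assumes "directed_set J le"
  shows "net_filter J le \<noteq> bot"
proof
  assume "net_filter J le = bot"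
  then obtain j where "j \<in> J" "\<forall>k\<in>J. le j k \<longrightarrow> False"
    using eventually_net_filter[OF assms, of "\<lambda>_. False"] by auto
  moreover have "\<forall>j\<in>J. le j j" using assms unfolding directed_set_def by (elim conjE)
  ultimately show False by blast
qed

lemma net_diverges_eventually_not_in_compact:
  fixes x :: "'j \<Rightarrow> 'g::topological_space"
  assumes d: "directed_set J le" and div: "net_diverges J le x" and K: "compact K"
  shows "eventually (\<lambda>j. x j \<notin> K) (net_filter J le)"
proof -
  have "\<exists>V. open V \<and> p \<in> V \<and> eventually (\<lambda>k. x k \<notin> V) (net_filter J le)" for p
  proof -
    from div obtain V where V: "open V" "p \<in> V" "\<not> (\<forall>j\<in>J. \<exists>k\<in>J. le j k \<and> x k \<in> V)"
      unfolding net_diverges_def by blast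
    then have "eventually (\<lambda>k. x k \<notin> V) (net_filter J le)"
      by (auto simp: eventually_net_filter[OF d])
    then show ?thesis using V by blast
  qed
  then obtain V where V: "\<And>p. open (V p)" "\<And>p. p \<in> V p"
    "\<And>p. eventually (\<lambda>k. x k \<notin> V p) (net_filter J le)"
    by metis
  obtain C where C: "C \<subseteq> K" "finite C" "K \<subseteq> (\<Union>c\<in>C. V c)"
    using compactE_image[OF K, of K V] V(1,2) by blast
  have "eventually (\<lambda>k. \<forall>c\<in>C. x k \<notin> V c) (net_filter J le)"
    using C(2) V(3) by (simp add: eventually_ball_finite)
  then show ?thesis by eventually_elim (use C(3) in blast)
qed

lemma compact_gen_pow:
  fixes Z :: "'g::topological_group_add set"
  assumes "compact Z"
  shows "compact (gen_pow Z n)"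
proof (induction n)
  case 0 then show ?case by simp
next
  case (Suc n)
  have "gen_pow Z (Suc n) = (\<lambda>p. fst p + snd p) ` (Z \<times> gen_pow Z n)"
    by (auto simp: image_iff) (metis fst_conv snd_conv, blast)
  also have "compact \<dots>"
    by (rule compact_continuous_image) (auto intro!: continuous_intros compact_Times assms Suc)
  finally show ?case .
qed

lemma filterlim_word_length_at_top:
  fixes Y :: "'g::topological_group_add set"
  assumes Y: "compact_generating_set Y" and d: "directed_set J le" and div: "net_diverges J le x"
  shows "filterlim (\<lambda>j. word_length Y (x j)) at_top (net_filter J le)"
  unfolding filterlim_at_top
proof
  fix n
  define Z where "Z = Y \<union> uminus ` Y"
  have "compact Z" using Y unfolding Z_def compact_generating_set_def
    by (intro compact_Un compact_continuous_image continuous_intros) auto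
  then have cK: "compact (\<Union>m\<in>{..<n}. gen_pow Z m)" by (intro compact_UN finite_lessThan compact_gen_pow)
  have small: "g \<in> (\<Union>m\<in>{..<n}. gen_pow Z m)" if "word_length Y g < n" for g
  proof -
    obtain m where "g \<in> gen_pow Z m" using Y by (auto simp: compact_generating_set_def Z_def)
    then have "g \<in> gen_pow Z (word_length Y g)"
      unfolding word_length_def Z_def[symmetric] by (rule LeastI)
    then show ?thesis using that by auto
  qed
  show "eventually (\<lambda>j. n \<le> word_length Y (x j)) (net_filter J le)"
    by (rule eventually_mono[OF net_diverges_eventually_not_in_compact[OF d div cK]])
       (use small not_le in blast)
qed

section \<open>Orthonormal bases of finite-dimensional subspaces\<close>

definition orthonormal :: "'a::complex_inner_space set \<Rightarrow> bool" where
  "orthonormal E \<longleftrightarrow> (\<forall>e\<in>E. cinner e e = 1) \<and> (\<forall>e\<in>E. \<forall>e'\<in>E. e \<noteq> e' \<longrightarrow> cinner e e' = 0)"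

definition expand :: "'a::complex_inner_space set \<Rightarrow> 'a \<Rightarrow> 'a" where
  "expand E w = (\<Sum>e\<in>E. scaleC (cinner e w) e)"

lemma expand_add: "expand E (x + y) = expand E x + expand E y"
  by (simp add: expand_def cinner_add_right scaleC_add_left sum.distrib)

lemma expand_scaleC: "expand E (scaleC c x) = scaleC c (expand E x)"
  by (simp add: expand_def cinner_scaleC_right scaleC_sum_right scaleC_scaleC)

lemma expand_insert: "finite E \<Longrightarrow> u \<notin> E \<Longrightarrow> expand (insert u E) w = scaleC (cinner u w) u + expand E w"
  by (simp add: expand_def)

lemma expand_in_csubspace: "csubspace V \<Longrightarrow> E \<subseteq> V \<Longrightarrow> expand E w \<in> V"
  unfolding expand_def by (auto intro!: csubspace_sum csubspace_scaleC)

lemma cinner_expand: "cinner y (expand E w) = (\<Sum>e\<in>E. cinner e w * cinner y e)"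
  by (simp add: expand_def cinner_sum_right cinner_scaleC_right)

lemma cinner_expand_orthonormal:
  assumes "finite E" "orthonormal E" "e \<in> E"
  shows "cinner e (expand E w) = cinner e w"
proof -
  have "cinner e (expand E w) = cinner e w * cinner e e + (\<Sum>e'\<in>E - {e}. cinner e' w * cinner e e')"
    using assms by (simp add: cinner_expand sum.remove)
  also have "(\<Sum>e'\<in>E - {e}. cinner e' w * cinner e e') = 0"
    using assms by (intro sum.neutral) (auto simp: orthonormal_def)
  finally show ?thesis using assms by (simp add: orthonormal_def)
qed

lemma cspan_insert:
  assumes "w \<in> cspan (insert b B)"
  obtains c w' where "w' \<in> cspan B" "w = scaleC c b + w'"
proof -
  from assms obtain F cf where F: "finite F" "F \<subseteq> insert b B" "w = (\<Sum>f\<in>F. scaleC (cf f) f)"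
    by (auto simp: cspan_def)
  show ?thesis
  proof (cases "b \<in> F")
    case True
    have "w = scaleC (cf b) b + (\<Sum>f\<in>F - {b}. scaleC (cf f) f)"
      using F True by (simp add: sum.remove)
    moreover have "(\<Sum>f\<in>F - {b}. scaleC (cf f) f) \<in> cspan B"
      unfolding cspan_def using F by (intro CollectI exI[of _ "F - {b}"] exI[of _ cf]) auto
    ultimately show ?thesis using that by blast
  next
    case False
    then have "w \<in> cspan B"
      unfolding cspan_def using F by (intro CollectI exI[of _ F] exI[of _ cf]) auto
    then show ?thesis using that[of w 0] by simp
  qed
qed

lemma orthonormal_insert_normalized:
  assumes E: "orthonormal E" and r: "r \<noteq> 0" "\<And>e. e \<in> E \<Longrightarrow> cinner e r = 0"
  defines "u \<equiv> scaleC (complex_of_real (1 / norm r)) r"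
  shows "orthonormal (insert u E)" "u \<notin> E" "\<And>e. e \<in> E \<Longrightarrow> cinner u e = 0"
    "scaleC (cinner u r) u = r"
proof -
  have nr: "norm r > 0" using r(1) by simp
  have uu: "cinner u u = 1"
    using nr by (simp add: cinner_self_norm u_def norm_scaleC norm_divide)
  have eu: "cinner e u = 0" if "e \<in> E" for e
    using r(2)[OF that] by (simp add: u_def cinner_scaleC_right)
  then show ue: "cinner u e = 0" if "e \<in> E" for e
    using that cinner_commute[of e u] by simp
  show "u \<notin> E" using eu uu by force
  show "orthonormal (insert u E)"
    using E uu eu ue unfolding orthonormal_def by auto
  have "cinner u r = complex_of_real (norm r)"
    using nr by (simp add: u_def cinner_scaleC_left cinner_self_norm power2_eq_square)
  then show "scaleC (cinner u r) u = r"
    using nr by (simp add: u_def scaleC_scaleC scaleC_one)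
qed

text \<open>Gram--Schmidt: each new spanning vector contributes its normalized residual.\<close>

lemma orthonormal_basis_cspan:
  assumes "finite B" "csubspace V" "B \<subseteq> V"
  shows "\<exists>E. finite E \<and> E \<subseteq> V \<and> orthonormal E \<and> (\<forall>w\<in>cspan B. w = expand E w)"
  using assms
proof (induction B rule: finite_induct)
  case empty
  show ?case
    by (intro exI[of _ "{}"]) (auto simp: orthonormal_def expand_def cspan_def)
next
  case (insert b B)
  then obtain E where E: "finite E" "E \<subseteq> V" "orthonormal E" "\<forall>w\<in>cspan B. w = expand E w"
    by auto
  define r where "r = b - expand E b"
  have rV: "r \<in> V"
    unfolding r_def using insert.prems E(2) by (intro csubspace_diff expand_in_csubspace) auto
  have er: "cinner e r = 0" if "e \<in> E" for e
    using cinner_expand_orthonormal[OF E(1,3) that, of b] by (simp add: r_def cinner_diff_right)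
  have "\<exists>E'. finite E' \<and> E' \<subseteq> V \<and> orthonormal E' \<and> expand E' b = b \<and> (\<forall>w\<in>cspan B. w = expand E' w)"
  proof (cases "r = 0")
    case True
    then show ?thesis using E by (auto simp: r_def)
  next
    case False
    define u where "u = scaleC (complex_of_real (1 / norm r)) r"
    note u = orthonormal_insert_normalized[OF E(3) False er, folded u_def]
    have uE: "cinner u (expand E w) = 0" for w by (simp add: cinner_expand u(3))
    then have "cinner u w = 0" if "w \<in> cspan B" for w using E(4) that by metis
    then have "expand (insert u E) w = expand E w" if "w \<in> cspan B" for w
      using E(1) u(2) that by (simp add: expand_insert)
    moreover have "expand (insert u E) b = b"
      using E(1) u(2,4) uE[of b] by (simp add: expand_insert r_def cinner_diff_right)
    moreover have "u \<in> V" unfolding u_def using insert.prems(1) rV by (rule csubspace_scaleC)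
    ultimately show ?thesis using E u(1) by (intro exI[of _ "insert u E"]) auto
  qed
  then obtain E' where "finite E'" "E' \<subseteq> V" "orthonormal E'" "expand E' b = b"
    "\<forall>w\<in>cspan B. w = expand E' w" by blast
  then show ?case by (metis cspan_insert expand_add expand_scaleC)
qed

lemma finite_dim_csubspace_orthonormal_basis:
  assumes "finite_dim_csubspace V"
  obtains E where "finite E" "E \<subseteq> V" "orthonormal E" "\<And>w. w \<in> V \<Longrightarrow> w = expand E w"
proof -
  obtain B where B: "finite B" "V = cspan B" "csubspace V"
    using assms by (auto simp: finite_dim_csubspace_def)
  have "b \<in> cspan B" if "b \<in> B" for b
    unfolding cspan_def using that
    by (intro CollectI exI[of _ "{b}"] exI[of _ "\<lambda>_. 1"]) (simp add: scaleC_one)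
  then show ?thesis
    using orthonormal_basis_cspan[OF B(1,3)] B(2) that by blast
qed

section \<open>Vectors with vanishing matrix coefficients\<close>

lemma tendsto_0_on_closure:
  fixes f :: "'j \<Rightarrow> 'a::metric_space \<Rightarrow> 'b::real_normed_vector"
  assumes L: "\<And>j a b. norm (f j a - f j b) \<le> C * dist a b" and C: "0 \<le> C"
    and S: "\<And>a. a \<in> S \<Longrightarrow> ((\<lambda>j. f j a) \<longlongrightarrow> 0) F" and z: "z \<in> closure S"
  shows "((\<lambda>j. f j z) \<longlongrightarrow> 0) F"
proof (rule tendstoI)
  fix e :: real assume e: "0 < e"
  have e2: "0 < e / (2 * (C + 1))" using e C by simp
  obtain a where a: "a \<in> S" "dist a z < e / (2 * (C + 1))"
    using z e2 unfolding closure_approachable by blast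
  have "C * dist z a \<le> C * (e / (2 * (C + 1)))"
    using a(2) C by (intro mult_left_mono) (auto simp: dist_commute)
  also have "\<dots> \<le> e / 2" using C e by (simp add: field_simps)
  finally have Ca: "C * dist z a \<le> e / 2" .
  have "eventually (\<lambda>j. dist (f j a) 0 < e / 2) F" by (rule tendstoD[OF S[OF a(1)]]) (use e in simp)
  then show "eventually (\<lambda>j. dist (f j z) 0 < e) F"
  proof eventually_elim
    case (elim j)
    have "norm (f j z) \<le> norm (f j a) + norm (f j z - f j a)" by (rule norm_triangle_sub)
    also have "norm (f j z - f j a) \<le> C * dist z a" by (rule L)
    finally show ?case using elim Ca by simp
  qed
qed

lemma dense_symmetric:
  fixes T :: "'a::complex_inner_space \<Rightarrow> 'a"
  assumes T: "continuous_on UNIV T" and S: "closure S = UNIV"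
    and sym: "\<And>v w. v \<in> S \<Longrightarrow> w \<in> S \<Longrightarrow> cinner (T v) w = cinner v (T w)"
  shows "cinner (T v) w = cinner v (T w)"
proof -
  have half: "cinner (T v) w = cinner v (T w)" if "w \<in> S" for v w
    by (rule dense_continuous_eq[of "\<lambda>v. cinner (T v) w" "\<lambda>v. cinner v (T w)" S])
       (use T S sym that in \<open>auto intro!: continuous_intros\<close>)
  show ?thesis
    by (rule dense_continuous_eq[of "\<lambda>w. cinner (T v) w" "\<lambda>w. cinner v (T w)" S])
       (use T S half in \<open>auto intro!: continuous_intros\<close>)
qed

definition mixing_vectors :: "('j \<Rightarrow> 'h::complex_inner_space \<Rightarrow> 'h) \<Rightarrow> 'j filter \<Rightarrow> 'h set" where
  "mixing_vectors V F = {w. \<forall>\<psi>. ((\<lambda>j. cinner w (V j \<psi>)) \<longlongrightarrow> 0) F}"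

lemma csubspace_mixing_vectors: "csubspace (mixing_vectors V F)"
  unfolding csubspace_def mixing_vectors_def
proof (intro conjI ballI allI CollectI)
  fix a b \<psi> assume "a \<in> {w. \<forall>\<psi>. ((\<lambda>j. cinner w (V j \<psi>)) \<longlongrightarrow> 0) F}"
    "b \<in> {w. \<forall>\<psi>. ((\<lambda>j. cinner w (V j \<psi>)) \<longlongrightarrow> 0) F}"
  then show "((\<lambda>j. cinner (a + b) (V j \<psi>)) \<longlongrightarrow> 0) F"
    using tendsto_add[of "\<lambda>j. cinner a (V j \<psi>)" 0 F "\<lambda>j. cinner b (V j \<psi>)" 0]
    by (simp add: cinner_add_left)
next
  fix c a \<psi> assume "a \<in> {w. \<forall>\<psi>. ((\<lambda>j. cinner w (V j \<psi>)) \<longlongrightarrow> 0) F}"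
  then show "((\<lambda>j. cinner (scaleC c a) (V j \<psi>)) \<longlongrightarrow> 0) F"
    using tendsto_mult_right_zero[of "\<lambda>j. cinner a (V j \<psi>)" F "cnj c"]
    by (simp add: cinner_scaleC_left)
qed simp

lemma closed_mixing_vectors:
  assumes V: "\<And>j \<psi>. norm (V j \<psi>) \<le> norm \<psi>"
  shows "closed (mixing_vectors V F)"
proof -
  have "z \<in> mixing_vectors V F" if z: "z \<in> closure (mixing_vectors V F)" for z
    unfolding mixing_vectors_def
  proof (intro CollectI allI)
    fix \<psi>
    have "cmod (cinner a (V j \<psi>) - cinner b (V j \<psi>)) \<le> norm \<psi> * dist a b" for j a b
    proof -
      have "cmod (cinner a (V j \<psi>) - cinner b (V j \<psi>)) \<le> norm (a - b) * norm (V j \<psi>)"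
        using cinner_Cauchy_Schwarz[of "a - b"] by (simp add: cinner_diff_left)
      also have "\<dots> \<le> norm (a - b) * norm \<psi>" by (intro mult_left_mono V) simp
      finally show ?thesis by (simp add: dist_norm mult.commute)
    qed
    then show "((\<lambda>j. cinner z (V j \<psi>)) \<longlongrightarrow> 0) F"
      by (rule tendsto_0_on_closure[OF _ _ _ z]) (auto simp: mixing_vectors_def)
  qed
  then show ?thesis using closure_subset_eq by blast
qed

lemma orth_compl_kernel_subset:
  fixes D :: "'h::chilbert_space \<Rightarrow> 'h"
  assumes W: "csubspace W" "closed W" and S: "closure S = UNIV"
    and DS: "\<And>\<phi>. \<phi> \<in> S \<Longrightarrow> D \<phi> \<in> W"
    and sym: "\<And>v w. cinner (D v) w = cinner v (D w)"
  shows "orth_compl {\<psi>. D \<psi> = 0} \<subseteq> W"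
proof
  fix v assume v: "v \<in> orth_compl {\<psi>. D \<psi> = 0}"
  obtain m where m: "m \<in> W" "\<And>y. y \<in> W \<Longrightarrow> cinner y (v - m) = 0"
    using orthogonal_projection_exists[OF W, of v] by blast
  \<comment> \<open>\<open>v - m \<perp> D S\<close>, hence \<open>D (v - m) \<perp> S\<close> by symmetry; so \<open>v - m \<in> ker D\<close>, which is orthogonal to \<open>v\<close>\<close>
  have "D (v - m) = 0"
  proof (rule dense_orthogonal_eq_0[OF S])
    show "cinner \<phi> (D (v - m)) = 0" if "\<phi> \<in> S" for \<phi>
      using m(2)[OF DS[OF that]] by (simp add: sym)
  qed
  then have "cinner (v - m) v = 0" using v by (simp add: orth_compl_def)
  moreover have "cinner (v - m) m = 0" using m(2)[OF m(1)] cinner_commute[of "v - m" m] by simp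
  ultimately have "cinner (v - m) (v - m) = 0" by (simp add: cinner_diff_right)
  then show "v \<in> W" using m(1) by (simp add: cinner_self_eq_0)
qed

lemma finite_dim_invariant_mixing_trivial:
  assumes F: "F \<noteq> bot" and V: "\<And>j a b. cinner (V j a) (V j b) = cinner a b"
    and M: "finite_dim_csubspace M" "\<And>j. V j ` M \<subseteq> M" "M \<subseteq> mixing_vectors V F"
  shows "M = {0}"
proof -
  obtain E where E: "finite E" "E \<subseteq> M" "orthonormal E" "\<And>w. w \<in> M \<Longrightarrow> w = expand E w"
    using finite_dim_csubspace_orthonormal_basis[OF M(1)] by blast
  have "\<phi> = 0" if \<phi>: "\<phi> \<in> M" for \<phi>
  proof -
    \<comment> \<open>\<open>\<parallel>\<phi>\<parallel>\<^sup>2 = \<parallel>V j \<phi>\<parallel>\<^sup>2\<close> is a finite sum of products of coefficients of \<open>V j \<phi>\<close> tending to zero\<close>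
    have eq: "cinner \<phi> \<phi> = (\<Sum>e\<in>E. cinner e (V j \<phi>) * cinner (V j \<phi>) e)" for j
    proof -
      have "V j \<phi> \<in> M" using M(2) \<phi> by blast
      then have "cinner \<phi> \<phi> = cinner (V j \<phi>) (expand E (V j \<phi>))"
        using V[of j \<phi> \<phi>] E(4)[of "V j \<phi>"] by simp
      then show ?thesis by (simp add: cinner_expand)
    qed
    have coeff: "((\<lambda>j. cinner e (V j \<phi>)) \<longlongrightarrow> 0) F" if "e \<in> E" for e
      using that E(2) M(3) by (auto simp: mixing_vectors_def)
    have "((\<lambda>j. \<Sum>e\<in>E. cinner e (V j \<phi>) * cinner (V j \<phi>) e) \<longlongrightarrow> (\<Sum>e\<in>E. 0 * cnj 0)) F"
      using coeff tendsto_cnj[OF coeff]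
      by (intro tendsto_sum tendsto_mult) (auto simp: cinner_commute[of "V _ \<phi>"])
    then have "((\<lambda>j. cinner \<phi> \<phi>) \<longlongrightarrow> 0) F" by (simp add: eq[symmetric])
    then have "cinner \<phi> \<phi> = 0" by (rule tendsto_unique[OF F tendsto_const])
    then show ?thesis by (simp add: cinner_self_eq_0)
  qed
  then show ?thesis using csubspace_zero M(1) by (auto simp: finite_dim_csubspace_def)
qed

section \<open>The scaled commutators along a net\<close>

locale scaled_commutator_net = self_adjoint_operator domA A
  for domA :: "'h::chilbert_space set" and A +
  fixes U :: "'g::topological_group_add \<Rightarrow> 'h \<Rightarrow> 'h" and x :: "'j \<Rightarrow> 'g" and l :: "'j \<Rightarrow> nat"
    and F :: "'j filter" and D :: "'h \<Rightarrow> 'h"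
  assumes unitary_rep: "unitary_rep U"
    and C1_U: "\<And>g. C1 domA A (U g)"
    and F_proper: "F \<noteq> bot"
    and l_at_top: "filterlim l at_top F"
    and D_limit: "\<And>\<psi>. ((\<lambda>j. scaleC (1 / of_nat (l j)) (commutator domA A (U (x j)) (U (- x j) \<psi>)))
      \<longlongrightarrow> D \<psi>) F"
begin

definition scaled_comm :: "'j \<Rightarrow> 'h \<Rightarrow> 'h" where
  "scaled_comm j \<psi> = scaleC (1 / of_nat (l j)) (commutator domA A (U (x j)) (U (- x j) \<psi>))"

lemma U_dom: "\<psi> \<in> domA \<Longrightarrow> U g \<psi> \<in> domA"
  by (rule C1_dom_invariant[OF C1_U])

lemma scaled_comm_eq:
  assumes "\<phi> \<in> domA"
  shows "scaled_comm j \<phi> = scaleC (1 / of_nat (l j)) (A \<phi> - U (x j) (A (U (- x j) \<phi>)))"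
  using commutator_eq[OF C1_U U_dom[OF assms]]
  by (simp add: scaled_comm_def unitary_rep_cancel_right[OF unitary_rep])

lemma continuous_on_scaled_comm: "continuous_on UNIV (scaled_comm j)"
  unfolding scaled_comm_def
  by (intro continuous_intros continuous_on_compose2[OF bounded_clinear_continuous_on[OF
        bounded_clinear_commutator[OF C1_U]] bounded_clinear_continuous_on[OF
        unitary_rep_bounded_clinear[OF unitary_rep]]]) auto

lemma scaled_comm_symmetric: "cinner (scaled_comm j v) w = cinner v (scaled_comm j w)"
proof (rule dense_symmetric[OF continuous_on_scaled_comm dom_dense])
  fix v w assume vw: "v \<in> domA" "w \<in> domA"
  have "cinner (U (x j) (A (U (- x j) v))) w = cinner (A (U (- x j) v)) (U (- x j) w)"
    by (rule unitary_rep_adjoint[OF unitary_rep])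
  also have "\<dots> = cinner (U (- x j) v) (A (U (- x j) w))"
    by (rule A_symmetric[OF U_dom[OF vw(1)] U_dom[OF vw(2)]])
  also have "\<dots> = cinner v (U (x j) (A (U (- x j) w)))"
    using unitary_rep_adjoint[OF unitary_rep, of "- x j"] by simp
  finally show "cinner (scaled_comm j v) w = cinner v (scaled_comm j w)"
    by (simp add: scaled_comm_eq vw cinner_scaleC_left cinner_scaleC_right cinner_diff_left
        cinner_diff_right A_symmetric del: of_nat_eq_0_iff)
qed

lemma D_symmetric: "cinner (D v) w = cinner v (D w)"
proof (rule tendsto_unique[OF F_proper])
  show "((\<lambda>j. cinner (scaled_comm j v) w) \<longlongrightarrow> cinner (D v) w) F"
    unfolding scaled_comm_def by (intro tendsto_intros D_limit)
  show "((\<lambda>j. cinner (scaled_comm j v) w) \<longlongrightarrow> cinner v (D w)) F"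
    unfolding scaled_comm_symmetric unfolding scaled_comm_def by (intro tendsto_intros D_limit)
qed

lemma cinner_scaled_comm_U:
  assumes "\<phi> \<in> domA" "\<psi> \<in> domA"
  shows "cinner (scaled_comm j \<phi>) (U (x j) \<psi>) =
    (1 / of_nat (l j)) * (cinner (A \<phi>) (U (x j) \<psi>) - cinner \<phi> (U (x j) (A \<psi>)))"
proof -
  have "cinner (U (x j) (A (U (- x j) \<phi>))) (U (x j) \<psi>) = cinner (A (U (- x j) \<phi>)) \<psi>"
    by (rule unitary_rep_cinner[OF unitary_rep])
  also have "\<dots> = cinner (U (- x j) \<phi>) (A \<psi>)" by (rule A_symmetric[OF U_dom[OF assms(1)] assms(2)])
  also have "\<dots> = cinner \<phi> (U (x j) (A \<psi>))" by (simp add: unitary_rep_adjoint'[OF unitary_rep])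
  finally show ?thesis
    by (simp add: scaled_comm_eq assms cinner_scaleC_left cinner_diff_left del: of_nat_eq_0_iff)
qed

lemma cinner_scaled_comm_U_tendsto_0:
  assumes \<phi>: "\<phi> \<in> domA" and \<psi>: "\<psi> \<in> domA"
  shows "((\<lambda>j. cinner (scaled_comm j \<phi>) (U (x j) \<psi>)) \<longlongrightarrow> 0) F"
proof (rule Lim_null_comparison)
  define M where "M = norm (A \<phi>) * norm \<psi> + norm \<phi> * norm (A \<psi>)"
  have "filterlim (\<lambda>j. real (l j)) at_infinity F"
    using filterlim_compose[OF filterlim_real_sequentially l_at_top]
    by (rule filterlim_at_top_imp_at_infinity)
  then show "((\<lambda>j. M / real (l j)) \<longlongrightarrow> 0) F" by (rule tendsto_divide_0[OF tendsto_const])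
  show "eventually (\<lambda>j. norm (cinner (scaled_comm j \<phi>) (U (x j) \<psi>)) \<le> M / real (l j)) F"
  proof (rule always_eventually, intro allI)
    fix j
    have "cmod (cinner (A \<phi>) (U (x j) \<psi>) - cinner \<phi> (U (x j) (A \<psi>)))
        \<le> cmod (cinner (A \<phi>) (U (x j) \<psi>)) + cmod (cinner \<phi> (U (x j) (A \<psi>)))"
      by (rule norm_triangle_ineq4)
    also have "\<dots> \<le> norm (A \<phi>) * norm (U (x j) \<psi>) + norm \<phi> * norm (U (x j) (A \<psi>))"
      by (intro add_mono cinner_Cauchy_Schwarz)
    also have "\<dots> = M" by (simp add: M_def unitary_rep_norm[OF unitary_rep])
    finally show "norm (cinner (scaled_comm j \<phi>) (U (x j) \<psi>)) \<le> M / real (l j)"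
      by (simp add: cinner_scaled_comm_U[OF \<phi> \<psi>] norm_mult norm_divide divide_right_mono)
  qed
qed

lemma D_dom_mixing:
  assumes \<phi>: "\<phi> \<in> domA"
  shows "D \<phi> \<in> mixing_vectors (\<lambda>j. U (x j)) F"
  unfolding mixing_vectors_def
proof (intro CollectI allI)
  have on_dom: "((\<lambda>j. cinner (D \<phi>) (U (x j) \<psi>)) \<longlongrightarrow> 0) F" if \<psi>: "\<psi> \<in> domA" for \<psi>
  proof -
    have "((\<lambda>j. D \<phi> - scaled_comm j \<phi>) \<longlongrightarrow> 0) F"
      using tendsto_diff[OF tendsto_const[of "D \<phi>"] D_limit[of \<phi>]] by (simp add: scaled_comm_def)
    then have "((\<lambda>j. norm (D \<phi> - scaled_comm j \<phi>) * norm \<psi>) \<longlongrightarrow> 0) F"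
      by (intro tendsto_mult_left_zero tendsto_norm_zero)
    then have "((\<lambda>j. cinner (D \<phi> - scaled_comm j \<phi>) (U (x j) \<psi>)) \<longlongrightarrow> 0) F"
      by (rule Lim_null_comparison[rotated], intro always_eventually allI)
         (use cinner_Cauchy_Schwarz[of "D \<phi> - scaled_comm _ \<phi>" "U (x _) \<psi>"] in
           \<open>simp add: unitary_rep_norm[OF unitary_rep]\<close>)
    from tendsto_add[OF cinner_scaled_comm_U_tendsto_0[OF \<phi> \<psi>] this]
    show ?thesis by (simp add: cinner_diff_left)
  qed
  fix \<psi>
  have "cmod (cinner (D \<phi>) (U (x j) a) - cinner (D \<phi>) (U (x j) b)) \<le> norm (D \<phi>) * dist a b" for j a b
    using cinner_Cauchy_Schwarz[of "D \<phi>" "U (x j) (a - b)"] unitary_rep_norm[OF unitary_rep, of "x j" "a - b"]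
    by (simp add: cinner_diff_right bounded_clinear_diff[OF unitary_rep_bounded_clinear[OF unitary_rep]]
        dist_norm)
  then show "((\<lambda>j. cinner (D \<phi>) (U (x j) \<psi>)) \<longlongrightarrow> 0) F"
    by (rule tendsto_0_on_closure[where S = domA]) (auto simp: dom_dense on_dom)
qed

lemma orth_compl_kernel_mixing: "orth_compl {\<psi>. D \<psi> = 0} \<subseteq> mixing_vectors (\<lambda>j. U (x j)) F"
  by (rule orth_compl_kernel_subset[OF csubspace_mixing_vectors closed_mixing_vectors dom_dense
        D_dom_mixing D_symmetric]) (simp add: unitary_rep_norm[OF unitary_rep])

end

theorem corollary2p5:
  fixes Y :: "'g::{topological_group_add, t2_space} set"
    and U :: "'g \<Rightarrow> 'h::chilbert_space \<Rightarrow> 'h"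
    and J :: "'j set" and le :: "'j \<Rightarrow> 'j \<Rightarrow> bool" and x :: "'j \<Rightarrow> 'g"
    and domA :: "'h set" and A :: "'h \<Rightarrow> 'h" and D :: "'h \<Rightarrow> 'h"
  assumes "locally compact (UNIV :: 'g set)"
    and "compact_generating_set Y"
    and "unitary_rep U"
    and "directed_set J le"
    and "net_diverges J le x"
    and "self_adjoint domA A"
    and "\<forall>y\<in>Y. C1 domA A (U y)"
    and "\<forall>\<psi>. ((\<lambda>j. scaleC (1 / of_nat (word_length Y (x j)))
                 (commutator domA A (U (x j)) (U (- x j) \<psi>))) \<longlongrightarrow> D \<psi>) (net_filter J le)"
  shows "(\<forall>\<phi>\<in>orth_compl {\<psi>. D \<psi> = 0}. \<forall>\<psi>.
            ((\<lambda>j. cinner \<phi> (U (x j) \<psi>)) \<longlongrightarrow> 0) (net_filter J le))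
       \<and> \<not> (\<exists>V. finite_dim_csubspace V \<and> V \<noteq> {0} \<and> V \<subseteq> orth_compl {\<psi>. D \<psi> = 0}
                \<and> (\<forall>g. U g ` V \<subseteq> V))"
proof -
  interpret self_adjoint_operator domA A by unfold_locales (rule assms(6))
  interpret scaled_commutator_net domA A U x "\<lambda>j. word_length Y (x j)" "net_filter J le" D
  proof
    show "C1 domA A (U g)" for g by (rule C1_unitary_rep_generated[OF assms(3,2,7)])
    show "net_filter J le \<noteq> bot" by (rule net_filter_neq_bot[OF assms(4)])
    show "filterlim (\<lambda>j. word_length Y (x j)) at_top (net_filter J le)"
      by (rule filterlim_word_length_at_top[OF assms(2,4,5)])
  qed (use assms(3,8) in auto)
  have "V = {0}" if "finite_dim_csubspace V" "V \<subseteq> orth_compl {\<psi>. D \<psi> = 0}" "\<forall>g. U g ` V \<subseteq> V" for V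
    using that orth_compl_kernel_mixing
    by (intro finite_dim_invariant_mixing_trivial[OF F_proper unitary_rep_cinner[OF assms(3)]]) auto
  then show ?thesis using orth_compl_kernel_mixing unfolding mixing_vectors_def by blast
qed

end
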